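(* Let $\mathcal{E}$ be a right exact category and let $\mathcal{A}$ be a strongly right percolating subcategory of $\mathcal{E}$. Then the right multiplicative system $S_{\mathcal{A}}$ of weak isomorphisms is right weakly saturated.
   Context: A conflation category is an additive category with a class of kernel-cokernel pairs (conflations; kernel part = inflation, cokernel part = deflation) closed under isomorphism. It is right exact if $1_0$ is a deflation, deflations compose, and pullbacks of deflations along arbitrary morphisms exist and are deflations. A non-empty full subcategory $\mathcal{A}$ of $\mathcal{E}$ is right percolating if: (P1) for every conflation $A'\rightarrowtail A\twoheadrightarrow A''$, $A\in\mathcal{A}$ iff $A',A''\in\mathcal{A}$; (P2) every morphism $C\to A$ with $A\in\mathcal{A}$ factors as a deflation $C\twoheadrightarrow A'$ with $A'\in\mathcal{A}$ followed by a morphism $A'\to A$; (P3) for an inflation $C\rightarrowtail D$ and a deflation $C\twoheadrightarrow A$ with $A\in\mathcal{A}$, the pushout exists and the induced maps $A\to P$, $D\to P$ are an inflation and a deflation; (P4) for every inflation $A\rightarrowtail X$ and deflation $X\twoheadrightarrow B$ with $A,B\in\mathcal{A}$ there are $A',B'\in\mathcal{A}$, deflations $A\twoheadrightarrow A'$, $X\twoheadrightarrow B'$, an inflation $A'\rightarrowtail B'$ and a morphism $B'\to B$ with $A\rightarrowtail X\twoheadrightarrow B'$ equal to $A\twoheadrightarrow A'\rightarrowtail B'$ and $X\twoheadrightarrow B$ equal to $X\twoheadrightarrow B'\to B$. It is strongly right percolating if moreover the morphism $A'\to A$ in (P2) can always be chosen to be a monomorphism. An $\mathcal{A}^{-1}$-inflation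 is an inflation with cokernel in $\mathcal{A}$, an $\mathcal{A}^{-1}$-deflation a deflation with kernel in $\mathcal{A}$; $S_{\mathcal{A}}$ is the class of finite composites of these (it is a right multiplicative system). With $Q\colon\mathcal{E}\to S_{\mathcal{A}}^{-1}\mathcal{E}$ the localization functor, $S_{\mathcal{A}}$ is right weakly saturated if for every morphism $f$ of $\mathcal{E}$ with $Q(f)$ an isomorphism there exists $s\in S_{\mathcal{A}}$ with $f\circ s\in S_{\mathcal{A}}$. *)

theory Defs
  imports Main
begin

record ('o, 'm) category =
  Obj  :: "'o set"
  Arr  :: "'m set"
  Dom  :: "'m \<Rightarrow> 'o"
  Cod  :: "'m \<Rightarrow> 'o"
  Id   :: "'o \<Rightarrow> 'm"
  Comp :: "'m \<Rightarrow> 'm \<Rightarrow> 'm"   (* Comp g f = g \<circ> f *)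

definition hom :: "('o,'m,'x) category_scheme \<Rightarrow> 'o \<Rightarrow> 'o \<Rightarrow> 'm set" where
  "hom C a b = {f \<in> Arr C. Dom C f = a \<and> Cod C f = b}"

definition is_category :: "('o,'m,'x) category_scheme \<Rightarrow> bool" where
  "is_category C \<longleftrightarrow>
     (\<forall>f\<in>Arr C. Dom C f \<in> Obj C \<and> Cod C f \<in> Obj C) \<and>
     (\<forall>a\<in>Obj C. Id C a \<in> hom C a a) \<and>
     (\<forall>f\<in>Arr C. \<forall>g\<in>Arr C. Cod C f = Dom C g \<longrightarrow> Comp C g f \<in> hom C (Dom C f) (Cod C g)) \<and>
     (\<forall>f\<in>Arr C. Comp C f (Id C (Dom C f)) = f \<and> Comp C (Id C (Cod C f)) f = f) \<and>
     (\<forall>f\<in>Arr C. \<forall>g\<in>Arr C. \<forall>h\<in>Arr C. Cod C f = Dom C g \<longrightarrow> Cod C g = Dom C h \<longrightarrow>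
          Comp C h (Comp C g f) = Comp C (Comp C h g) f)"

definition is_iso :: "('o,'m,'x) category_scheme \<Rightarrow> 'm \<Rightarrow> bool" where
  "is_iso C f \<longleftrightarrow> f \<in> Arr C \<and>
     (\<exists>g\<in>hom C (Cod C f) (Dom C f). Comp C g f = Id C (Dom C f) \<and> Comp C f g = Id C (Cod C f))"

definition is_mono :: "('o,'m,'x) category_scheme \<Rightarrow> 'm \<Rightarrow> bool" where
  "is_mono C f \<longleftrightarrow> f \<in> Arr C \<and>
     (\<forall>g\<in>Arr C. \<forall>h\<in>Arr C. Cod C g = Dom C f \<longrightarrow> Cod C h = Dom C f \<longrightarrow> Dom C g = Dom C h \<longrightarrow>
        Comp C f g = Comp C f h \<longrightarrow> g = h)"

definition is_functor ::
  "('o,'m,'x) category_scheme \<Rightarrow> ('p,'n,'y) category_scheme \<Rightarrow> ('o \<Rightarrow> 'p) \<Rightarrow> ('m \<Rightarrow> 'n) \<Rightarrow> bool" where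
  "is_functor C D Fo Fm \<longleftrightarrow>
     (\<forall>a\<in>Obj C. Fo a \<in> Obj D) \<and>
     (\<forall>f\<in>Arr C. Fm f \<in> Arr D \<and> Dom D (Fm f) = Fo (Dom C f) \<and> Cod D (Fm f) = Fo (Cod C f)) \<and>
     (\<forall>a\<in>Obj C. Fm (Id C a) = Id D (Fo a)) \<and>
     (\<forall>f\<in>Arr C. \<forall>g\<in>Arr C. Cod C f = Dom C g \<longrightarrow> Fm (Comp C g f) = Comp D (Fm g) (Fm f))"

definition is_pullback :: "('o,'m,'x) category_scheme \<Rightarrow> 'm \<Rightarrow> 'm \<Rightarrow> 'm \<Rightarrow> 'm \<Rightarrow> bool" where
  "is_pullback C f g p q \<longleftrightarrow> f \<in> Arr C \<and> g \<in> Arr C \<and> p \<in> Arr C \<and> q \<in> Arr C \<and>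
     Cod C f = Cod C g \<and> Dom C p = Dom C q \<and> Cod C p = Dom C f \<and> Cod C q = Dom C g \<and>
     Comp C f p = Comp C g q \<and>
     (\<forall>p'\<in>Arr C. \<forall>q'\<in>Arr C. Dom C p' = Dom C q' \<longrightarrow> Cod C p' = Dom C f \<longrightarrow> Cod C q' = Dom C g \<longrightarrow>
        Comp C f p' = Comp C g q' \<longrightarrow>
        (\<exists>!h. h \<in> hom C (Dom C p') (Dom C p) \<and> Comp C p h = p' \<and> Comp C q h = q'))"

definition is_pushout :: "('o,'m,'x) category_scheme \<Rightarrow> 'm \<Rightarrow> 'm \<Rightarrow> 'm \<Rightarrow> 'm \<Rightarrow> bool" where
  "is_pushout C f g p q \<longleftrightarrow> f \<in> Arr C \<and> g \<in> Arr C \<and> p \<in> Arr C \<and> q \<in> Arr C \<and>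
     Dom C f = Dom C g \<and> Cod C p = Cod C q \<and> Cod C f = Dom C p \<and> Cod C g = Dom C q \<and>
     Comp C p f = Comp C q g \<and>
     (\<forall>p'\<in>Arr C. \<forall>q'\<in>Arr C. Cod C p' = Cod C q' \<longrightarrow> Dom C p' = Cod C f \<longrightarrow> Dom C q' = Cod C g \<longrightarrow>
        Comp C p' f = Comp C q' g \<longrightarrow>
        (\<exists>!h. h \<in> hom C (Cod C p) (Cod C p') \<and> Comp C h p = p' \<and> Comp C h q = q'))"

record ('o, 'm) addcat = "('o, 'm) category" +
  Add  :: "'m \<Rightarrow> 'm \<Rightarrow> 'm"
  Zero :: "'o \<Rightarrow> 'o \<Rightarrow> 'm"
  Neg  :: "'m \<Rightarrow> 'm"

definition zero_object :: "('o,'m,'x) category_scheme \<Rightarrow> 'o \<Rightarrow> bool" where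
  "zero_object C z \<longleftrightarrow> z \<in> Obj C \<and>
     (\<forall>a\<in>Obj C. (\<exists>!f. f \<in> hom C a z) \<and> (\<exists>!f. f \<in> hom C z a))"

definition is_additive :: "('o,'m,'x) addcat_scheme \<Rightarrow> bool" where
  "is_additive C \<longleftrightarrow> is_category C \<and>
     \<comment> \<open>each Hom(a,b) is an abelian group\<close>
     (\<forall>a\<in>Obj C. \<forall>b\<in>Obj C. Zero C a b \<in> hom C a b \<and>
        (\<forall>f\<in>hom C a b. Neg C f \<in> hom C a b \<and> Add C f (Zero C a b) = f \<and> Add C f (Neg C f) = Zero C a b) \<and>
        (\<forall>f\<in>hom C a b. \<forall>g\<in>hom C a b. Add C f g \<in> hom C a b \<and> Add C f g = Add C g f) \<and>
        (\<forall>f\<in>hom C a b. \<forall>g\<in>hom C a b. \<forall>h\<in>hom C a b. Add C (Add C f g) h = Add C f (Add C g h))) \<and>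
     \<comment> \<open>composition is bilinear\<close>
     (\<forall>a\<in>Obj C. \<forall>b\<in>Obj C. \<forall>c\<in>Obj C.
        (\<forall>f\<in>hom C a b. \<forall>f'\<in>hom C a b. \<forall>g\<in>hom C b c. Comp C g (Add C f f') = Add C (Comp C g f) (Comp C g f')) \<and>
        (\<forall>f\<in>hom C a b. \<forall>g\<in>hom C b c. \<forall>g'\<in>hom C b c. Comp C (Add C g g') f = Add C (Comp C g f) (Comp C g' f))) \<and>
     \<comment> \<open>zero object\<close>
     (\<exists>z. zero_object C z) \<and>
     \<comment> \<open>binary biproducts\<close>
     (\<forall>a\<in>Obj C. \<forall>b\<in>Obj C. \<exists>c\<in>Obj C. \<exists>p1\<in>hom C c a. \<exists>p2\<in>hom C c b. \<exists>i1\<in>hom C a c. \<exists>i2\<in>hom C b c.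
        Comp C p1 i1 = Id C a \<and> Comp C p2 i2 = Id C b \<and>
        Comp C p2 i1 = Zero C a b \<and> Comp C p1 i2 = Zero C b a \<and>
        Add C (Comp C i1 p1) (Comp C i2 p2) = Id C c)"

definition is_kernel :: "('o,'m,'x) addcat_scheme \<Rightarrow> 'm \<Rightarrow> 'm \<Rightarrow> bool" where
  "is_kernel C k p \<longleftrightarrow> k \<in> Arr C \<and> p \<in> Arr C \<and> Cod C k = Dom C p \<and>
     Comp C p k = Zero C (Dom C k) (Cod C p) \<and>
     (\<forall>g\<in>Arr C. Cod C g = Dom C p \<longrightarrow> Comp C p g = Zero C (Dom C g) (Cod C p) \<longrightarrow>
        (\<exists>!h. h \<in> hom C (Dom C g) (Dom C k) \<and> Comp C k h = g))"

definition is_cokernel :: "('o,'m,'x) addcat_scheme \<Rightarrow> 'm \<Rightarrow> 'm \<Rightarrow> bool" where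
  "is_cokernel C c i \<longleftrightarrow> c \<in> Arr C \<and> i \<in> Arr C \<and> Cod C i = Dom C c \<and>
     Comp C c i = Zero C (Dom C i) (Cod C c) \<and>
     (\<forall>g\<in>Arr C. Dom C g = Cod C i \<longrightarrow> Comp C g i = Zero C (Dom C i) (Cod C g) \<longrightarrow>
        (\<exists>!h. h \<in> hom C (Cod C c) (Cod C g) \<and> Comp C h c = g))"

definition kernel_cokernel_pair :: "('o,'m,'x) addcat_scheme \<Rightarrow> 'm \<Rightarrow> 'm \<Rightarrow> bool" where
  "kernel_cokernel_pair C i p \<longleftrightarrow> is_kernel C i p \<and> is_cokernel C p i"

definition conflation_category :: "('o,'m,'x) addcat_scheme \<Rightarrow> ('m \<times> 'm) set \<Rightarrow> bool" where
  "conflation_category C Conf \<longleftrightarrow> is_additive C \<and>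
     (\<forall>(i,p)\<in>Conf. kernel_cokernel_pair C i p) \<and>
     \<comment> \<open>closed under isomorphisms of sequences\<close>
     (\<forall>(i,p)\<in>Conf. \<forall>i'\<in>Arr C. \<forall>p'\<in>Arr C. \<forall>a b c.
        Cod C i' = Dom C p' \<longrightarrow>
        a \<in> hom C (Dom C i) (Dom C i') \<longrightarrow> b \<in> hom C (Cod C i) (Cod C i') \<longrightarrow>
        c \<in> hom C (Cod C p) (Cod C p') \<longrightarrow>
        is_iso C a \<longrightarrow> is_iso C b \<longrightarrow> is_iso C c \<longrightarrow>
        Comp C b i = Comp C i' a \<longrightarrow> Comp C c p = Comp C p' b \<longrightarrow> (i', p') \<in> Conf)"

definition inflation :: "('m \<times> 'm) set \<Rightarrow> 'm \<Rightarrow> bool" where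
  "inflation Conf i \<longleftrightarrow> (\<exists>p. (i, p) \<in> Conf)"

definition deflation :: "('m \<times> 'm) set \<Rightarrow> 'm \<Rightarrow> bool" where
  "deflation Conf p \<longleftrightarrow> (\<exists>i. (i, p) \<in> Conf)"

definition right_exact :: "('o,'m,'x) addcat_scheme \<Rightarrow> ('m \<times> 'm) set \<Rightarrow> bool" where
  "right_exact C Conf \<longleftrightarrow> conflation_category C Conf \<and>
     \<comment> \<open>R0\<close>
     (\<forall>z. zero_object C z \<longrightarrow> deflation Conf (Id C z)) \<and>
     \<comment> \<open>R1\<close>
     (\<forall>p q. deflation Conf p \<longrightarrow> deflation Conf q \<longrightarrow> Cod C p = Dom C q \<longrightarrow> deflation Conf (Comp C q p)) \<and>
     \<comment> \<open>R2: pullback of a deflation p : Y \<rightarrow> Z along f : Z' \<rightarrow> Z exists and p' : P \<rightarrow> Z' is a deflation\<close>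
     (\<forall>p f. deflation Conf p \<longrightarrow> f \<in> Arr C \<longrightarrow> Cod C f = Cod C p \<longrightarrow>
        (\<exists>f' p'. is_pullback C p f f' p' \<and> deflation Conf p'))"

definition right_percolating_P2 :: "('o,'m,'x) addcat_scheme \<Rightarrow> ('m \<times> 'm) set \<Rightarrow> 'o set \<Rightarrow> bool" where
  "right_percolating_P2 C Conf A \<longleftrightarrow>
     (\<forall>f\<in>Arr C. Cod C f \<in> A \<longrightarrow>
        (\<exists>p g. deflation Conf p \<and> Dom C p = Dom C f \<and> Cod C p \<in> A \<and>
               g \<in> hom C (Cod C p) (Cod C f) \<and> Comp C g p = f))"

definition strong_P2 :: "('o,'m,'x) addcat_scheme \<Rightarrow> ('m \<times> 'm) set \<Rightarrow> 'o set \<Rightarrow> bool" where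
  "strong_P2 C Conf A \<longleftrightarrow>
     (\<forall>f\<in>Arr C. Cod C f \<in> A \<longrightarrow>
        (\<exists>p g. deflation Conf p \<and> Dom C p = Dom C f \<and> Cod C p \<in> A \<and>
               g \<in> hom C (Cod C p) (Cod C f) \<and> Comp C g p = f \<and> is_mono C g))"

definition right_percolating :: "('o,'m,'x) addcat_scheme \<Rightarrow> ('m \<times> 'm) set \<Rightarrow> 'o set \<Rightarrow> bool" where
  "right_percolating C Conf A \<longleftrightarrow> A \<noteq> {} \<and> A \<subseteq> Obj C \<and>
     \<comment> \<open>P1\<close>
     (\<forall>(i,p)\<in>Conf. Cod C i \<in> A \<longleftrightarrow> (Dom C i \<in> A \<and> Cod C p \<in> A)) \<and>
     \<comment> \<open>P2\<close>
     right_percolating_P2 C Conf A \<and>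
     \<comment> \<open>P3: for inflation i : C' \<rightarrow> D, deflation p : C' \<rightarrow> A0 (A0 in A), pushout with i' : A0 \<rightarrow> P, p' : D \<rightarrow> P\<close>
     (\<forall>i p. inflation Conf i \<longrightarrow> deflation Conf p \<longrightarrow> Dom C i = Dom C p \<longrightarrow> Cod C p \<in> A \<longrightarrow>
        (\<exists>i' p'. is_pushout C p i i' p' \<and> inflation Conf i' \<and> deflation Conf p')) \<and>
     \<comment> \<open>P4\<close>
     (\<forall>i p. inflation Conf i \<longrightarrow> deflation Conf p \<longrightarrow> Cod C i = Dom C p \<longrightarrow>
        Dom C i \<in> A \<longrightarrow> Cod C p \<in> A \<longrightarrow>
        (\<exists>d1 d2 j m. deflation Conf d1 \<and> deflation Conf d2 \<and> inflation Conf j \<and> m \<in> Arr C \<and>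
           Dom C d1 = Dom C i \<and> Cod C d1 \<in> A \<and> Dom C d2 = Cod C i \<and> Cod C d2 \<in> A \<and>
           Dom C j = Cod C d1 \<and> Cod C j = Cod C d2 \<and>
           Dom C m = Cod C d2 \<and> Cod C m = Cod C p \<and>
           Comp C d2 i = Comp C j d1 \<and> p = Comp C m d2))"

definition strongly_right_percolating :: "('o,'m,'x) addcat_scheme \<Rightarrow> ('m \<times> 'm) set \<Rightarrow> 'o set \<Rightarrow> bool" where
  "strongly_right_percolating C Conf A \<longleftrightarrow> right_percolating C Conf A \<and> strong_P2 C Conf A"

definition A_inflation :: "('o,'m,'x) addcat_scheme \<Rightarrow> ('m \<times> 'm) set \<Rightarrow> 'o set \<Rightarrow> 'm \<Rightarrow> bool" where
  "A_inflation C Conf A i \<longleftrightarrow> (\<exists>p. (i, p) \<in> Conf \<and> Cod C p \<in> A)"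

definition A_deflation :: "('o,'m,'x) addcat_scheme \<Rightarrow> ('m \<times> 'm) set \<Rightarrow> 'o set \<Rightarrow> 'm \<Rightarrow> bool" where
  "A_deflation C Conf A p \<longleftrightarrow> (\<exists>i. (i, p) \<in> Conf \<and> Dom C i \<in> A)"

inductive_set S_A :: "('o,'m,'x) addcat_scheme \<Rightarrow> ('m \<times> 'm) set \<Rightarrow> 'o set \<Rightarrow> 'm set"
  for C Conf A where
  inf: "A_inflation C Conf A s \<Longrightarrow> s \<in> S_A C Conf A"
| defl: "A_deflation C Conf A s \<Longrightarrow> s \<in> S_A C Conf A"
| comp: "s \<in> S_A C Conf A \<Longrightarrow> t \<in> S_A C Conf A \<Longrightarrow> Cod C s = Dom C t \<Longrightarrow> Comp C t s \<in> S_A C Conf A"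

text \<open>Q(f) is an isomorphism in the localization S^-1 C iff every functor inverting S sends f to
  an isomorphism (universal property of Q). The target categories range over a type large enough
  to contain the (Gabriel-Zisman) localization: objects 'o, morphisms sets of zigzag paths.\<close>

definition localization_iso :: "('o,'m,'x) category_scheme \<Rightarrow> 'm set \<Rightarrow> 'm \<Rightarrow> bool" where
  "localization_iso C S f \<longleftrightarrow>
     (\<forall>(D :: ('o, ('o \<times> 'o \<times> ('m \<times> bool) list) set) category) Fo Fm.
        is_category D \<longrightarrow> is_functor C D Fo Fm \<longrightarrow> (\<forall>s\<in>S. is_iso D (Fm s)) \<longrightarrow> is_iso D (Fm f))"

definition right_weakly_saturated :: "('o,'m,'x) category_scheme \<Rightarrow> 'm set \<Rightarrow> bool" where
  "right_weakly_saturated C S \<longleftrightarrow>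
     (\<forall>f\<in>Arr C. localization_iso C S f \<longrightarrow> (\<exists>s\<in>S. Cod C s = Dom C f \<and> Comp C f s \<in> S))"

end

theory Submission
  imports Defs
begin

text \<open>
  Write \<open>Q\<close> for the localization at \<open>S\<close>. Testing \<open>Q\<close> against the functors \<open>X \<mapsto> S\<inverse>E(Y, X)\<close>,
  realised as categories of relations between equivalence classes of roofs \<open>Y \<leftarrow> \<cdot> \<rightarrow> X\<close>, shows:
  if \<open>Q f\<close> is invertible then \<open>f h \<in> S\<close> for some \<open>h\<close>; and if \<open>Q e\<close> is invertible and \<open>e c = 1\<close>, then
  \<open>c e u = u\<close> for some \<open>u \<in> S\<close>.

  So let \<open>Q f\<close> be invertible and \<open>t = f h \<in> S\<close>. Refining the square \<open>f h = t 1\<close> by the Ore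
  property yields \<open>s \<in> S\<close> and a split epimorphism \<open>e\<close> with \<open>f s = t e\<close>. Then \<open>Q e\<close> is invertible,
  so \<open>1 - c e\<close> vanishes on some \<open>u \<in> S\<close>; by induction over \<open>S\<close> (using P3 and P4) it therefore
  factors through an object of \<open>A\<close>. Strong percolation turns this factorization into \<open>u' \<in> S\<close> with
  \<open>e u' \<in> S\<close>, and \<open>f (s u') = t (e u') \<in> S\<close>.
\<close>

lemma hom_objs:
  "is_category C \<Longrightarrow> f \<in> hom C X Y \<Longrightarrow> X \<in> Obj C \<and> Y \<in> Obj C"
  unfolding is_category_def hom_def by auto

lemma comp_in_hom:
  "is_category C \<Longrightarrow> f \<in> hom C X Y \<Longrightarrow> g \<in> hom C Y W \<Longrightarrow> Comp C g f \<in> hom C X W"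
  unfolding is_category_def hom_def by auto

lemma comp_assoc:
  "is_category C \<Longrightarrow> f \<in> hom C X Y \<Longrightarrow> g \<in> hom C Y W \<Longrightarrow> h \<in> hom C W V \<Longrightarrow>
   Comp C h (Comp C g f) = Comp C (Comp C h g) f"
  unfolding is_category_def hom_def by auto

lemma id_in_hom: "is_category C \<Longrightarrow> X \<in> Obj C \<Longrightarrow> Id C X \<in> hom C X X"
  unfolding is_category_def by auto

lemma comp_id_left: "is_category C \<Longrightarrow> f \<in> hom C X Y \<Longrightarrow> Comp C (Id C Y) f = f"
  unfolding is_category_def hom_def by auto

lemma comp_id_right: "is_category C \<Longrightarrow> f \<in> hom C X Y \<Longrightarrow> Comp C f (Id C X) = f"
  unfolding is_category_def hom_def by auto

lemma comp_eq_precomp: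
  "is_category C \<Longrightarrow> f \<in> hom C X Y \<Longrightarrow> g \<in> hom C Y W \<Longrightarrow> f' \<in> hom C X Y' \<Longrightarrow> g' \<in> hom C Y' W \<Longrightarrow>
   Comp C g f = Comp C g' f' \<Longrightarrow> x \<in> hom C T X \<Longrightarrow> Comp C g (Comp C f x) = Comp C g' (Comp C f' x)"
  using comp_assoc[of C x T X f Y g W] comp_assoc[of C x T X f' Y' g' W] by simp

lemma is_isoI:
  "a \<in> hom C X Y \<Longrightarrow> b \<in> hom C Y X \<Longrightarrow> Comp C b a = Id C X \<Longrightarrow> Comp C a b = Id C Y \<Longrightarrow> is_iso C a"
  unfolding is_iso_def hom_def by auto

lemma is_isoE:
  assumes "is_iso C a" "a \<in> hom C X Y"
  obtains b where "b \<in> hom C Y X" "Comp C b a = Id C X" "Comp C a b = Id C Y"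
  using assms unfolding is_iso_def hom_def by auto

lemma iso_right_inverse_is_inverse:
  assumes C: "is_category C" and "is_iso C a" "a \<in> hom C X Y" "b \<in> hom C Y X" "Comp C a b = Id C Y"
  shows "Comp C b a = Id C X"
proof -
  obtain a' where a': "a' \<in> hom C Y X" "Comp C a' a = Id C X"
    using is_isoE[OF assms(2,3)] by blast
  have "a' = Comp C a' (Comp C a b)"
    using assms(5) comp_id_right[OF C a'(1)] by simp
  also have "\<dots> = b"
    using comp_assoc[OF C assms(4,3) a'(1)] a'(2) comp_id_left[OF C assms(4)] by simp
  finally show ?thesis using a'(2) by simp
qed

lemma iso_Id: "is_category C \<Longrightarrow> X \<in> Obj C \<Longrightarrow> is_iso C (Id C X)"
  using is_isoI[OF id_in_hom id_in_hom] comp_id_left id_in_hom by metis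

lemma iso_comp:
  assumes C: "is_category C" and "is_iso C a" "is_iso C b" "a \<in> hom C X Y" "b \<in> hom C Y W"
  shows "is_iso C (Comp C b a)"
proof -
  obtain a' where a': "a' \<in> hom C Y X" "Comp C a' a = Id C X" "Comp C a a' = Id C Y"
    using is_isoE[OF assms(2,4)] by blast
  obtain b' where b': "b' \<in> hom C W Y" "Comp C b' b = Id C Y" "Comp C b b' = Id C W"
    using is_isoE[OF assms(3,5)] by blast
  have "Comp C (Comp C a' b') (Comp C b a) = Comp C a' (Comp C (Comp C b' b) a)"
    using comp_assoc[OF C comp_in_hom[OF C assms(4,5)] b'(1) a'(1)] comp_assoc[OF C assms(4,5) b'(1)]
    by simp
  also have "\<dots> = Id C X" using b'(2) comp_id_left[OF C assms(4)] a'(2) by simp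
  finally have left: "Comp C (Comp C a' b') (Comp C b a) = Id C X" .
  have "Comp C (Comp C b a) (Comp C a' b') = Comp C b (Comp C (Comp C a a') b')"
    using comp_assoc[OF C comp_in_hom[OF C b'(1) a'(1)] assms(4,5)] comp_assoc[OF C b'(1) a'(1) assms(4)]
    by simp
  also have "\<dots> = Id C W" using a'(3) comp_id_left[OF C b'(1)] b'(3) by simp
  finally have right: "Comp C (Comp C b a) (Comp C a' b') = Id C W" .
  show ?thesis
    using is_isoI[OF comp_in_hom[OF C assms(4,5)] comp_in_hom[OF C b'(1) a'(1)] left right] .
qed

lemma iso_cancel_left:
  assumes C: "is_category C" and "is_iso C a" "is_iso C (Comp C a b)" "a \<in> hom C Y W" "b \<in> hom C X Y"
  shows "is_iso C b"
proof -
  obtain a' where a': "a' \<in> hom C W Y" "Comp C a' a = Id C Y" "Comp C a a' = Id C W"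
    using is_isoE[OF assms(2,4)] by blast
  have "is_iso C (Comp C a' (Comp C a b))"
    using iso_comp[OF C assms(3) is_isoI[OF a'(1) assms(4) a'(3,2)] comp_in_hom[OF C assms(5,4)] a'(1)] .
  moreover have "Comp C a' (Comp C a b) = b"
    using comp_assoc[OF C assms(5,4) a'(1)] a'(2) comp_id_left[OF C assms(5)] by simp
  ultimately show ?thesis by simp
qed

lemma pullback_univ:
  assumes "is_pullback C f g p q" "f \<in> hom C X Z" "g \<in> hom C Y Z" "p \<in> hom C P X" "q \<in> hom C P Y"
    "p' \<in> hom C T X" "q' \<in> hom C T Y" "Comp C f p' = Comp C g q'"
  shows "\<exists>!h. h \<in> hom C T P \<and> Comp C p h = p' \<and> Comp C q h = q'"
proof -
  have "\<forall>p'\<in>Arr C. \<forall>q'\<in>Arr C. Dom C p' = Dom C q' \<longrightarrow> Cod C p' = Dom C f \<longrightarrow> Cod C q' = Dom C g \<longrightarrow>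
      Comp C f p' = Comp C g q' \<longrightarrow> (\<exists>!h. h \<in> hom C (Dom C p') (Dom C p) \<and> Comp C p h = p' \<and> Comp C q h = q')"
    using assms(1) unfolding is_pullback_def by (elim conjE)
  note univ = this[rule_format, of p' q']
  have "p' \<in> Arr C" "q' \<in> Arr C" "Dom C p' = Dom C q'" "Cod C p' = Dom C f" "Cod C q' = Dom C g"
    and d: "Dom C p' = T" "Dom C p = P"
    using assms(2-7) unfolding hom_def by auto
  then show ?thesis using univ assms(8) unfolding d by blast
qed

lemma pushout_univ:
  assumes "is_pushout C f g p q" "f \<in> hom C Z X" "g \<in> hom C Z Y" "p \<in> hom C X P" "q \<in> hom C Y P"
    "p' \<in> hom C X T" "q' \<in> hom C Y T" "Comp C p' f = Comp C q' g"
  shows "\<exists>!h. h \<in> hom C P T \<and> Comp C h p = p' \<and> Comp C h q = q'"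
proof -
  have "\<forall>p'\<in>Arr C. \<forall>q'\<in>Arr C. Cod C p' = Cod C q' \<longrightarrow> Dom C p' = Cod C f \<longrightarrow> Dom C q' = Cod C g \<longrightarrow>
      Comp C p' f = Comp C q' g \<longrightarrow> (\<exists>!h. h \<in> hom C (Cod C p) (Cod C p') \<and> Comp C h p = p' \<and> Comp C h q = q')"
    using assms(1) unfolding is_pushout_def by (elim conjE)
  note univ = this[rule_format, of p' q']
  have "p' \<in> Arr C" "q' \<in> Arr C" "Cod C p' = Cod C q'" "Dom C p' = Cod C f" "Dom C q' = Cod C g"
    and d: "Cod C p' = T" "Cod C p = P"
    using assms(2-7) unfolding hom_def by auto
  then show ?thesis using univ assms(8) unfolding d by blast
qed

lemma pullback_of_identity_is_iso:
  assumes C: "is_category C" and g: "g \<in> hom C Y z" and pb: "is_pullback C (Id C z) g p q"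
  shows "is_iso C q"
proof -
  define P where "P = Dom C q"
  have O: "Y \<in> Obj C" "z \<in> Obj C" using hom_objs[OF C g] by auto
  have idz: "Id C z \<in> hom C z z" using id_in_hom[OF C O(2)] .
  have p: "p \<in> hom C P z" and q: "q \<in> hom C P Y" and sq: "Comp C (Id C z) p = Comp C g q"
    using pb idz g unfolding is_pullback_def hom_def P_def by (elim conjE; simp)+
  note univ = pullback_univ[OF pb idz g p q]
  have "Comp C (Id C z) g = Comp C g (Id C Y)" using comp_id_left[OF C g] comp_id_right[OF C g] by simp
  then obtain \<sigma> where \<sigma>: "\<sigma> \<in> hom C Y P" "Comp C p \<sigma> = g" "Comp C q \<sigma> = Id C Y"
    using univ[OF g id_in_hom[OF C O(1)]] by blast
  have U: "\<exists>!h. h \<in> hom C P P \<and> Comp C p h = p \<and> Comp C q h = q" using univ[OF p q sq] .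
  have "Comp C p (Comp C \<sigma> q) = p"
    using comp_assoc[OF C q \<sigma>(1) p] \<sigma>(2) sq comp_id_left[OF C p] by simp
  moreover have "Comp C q (Comp C \<sigma> q) = q" using comp_assoc[OF C q \<sigma>(1) q] \<sigma>(3) comp_id_left[OF C q] by simp
  ultimately have "Comp C \<sigma> q = Id C P"
    using U comp_in_hom[OF C q \<sigma>(1)] id_in_hom[OF C hom_objs[OF C p, THEN conjunct1]]
      comp_id_right[OF C p] comp_id_right[OF C q] by (metis (no_types, lifting))
  then show ?thesis using is_isoI[OF q \<sigma>(1)] \<sigma>(3) by blast
qed

lemma functor_hom:
  "is_functor C D Fo Fm \<Longrightarrow> f \<in> hom C X Y \<Longrightarrow> Fm f \<in> hom D (Fo X) (Fo Y)"
  unfolding is_functor_def hom_def by auto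

lemma functor_comp:
  "is_functor C D Fo Fm \<Longrightarrow> f \<in> hom C X Y \<Longrightarrow> g \<in> hom C Y W \<Longrightarrow>
   Fm (Comp C g f) = Comp D (Fm g) (Fm f)"
  unfolding is_functor_def hom_def by auto

lemma functor_id: "is_functor C D Fo Fm \<Longrightarrow> X \<in> Obj C \<Longrightarrow> Fm (Id C X) = Id D (Fo X)"
  unfolding is_functor_def by auto

lemma localization_iso_cancel:
  fixes C :: "('o, 'm, 'x) category_scheme"
  assumes "localization_iso C S f" "f \<in> hom C X Y" "s \<in> S" "s \<in> hom C X' X" "t \<in> S" "t \<in> hom C W Y"
    "f' \<in> hom C X' W" "Comp C f s = Comp C t f'"
  shows "localization_iso C S f'"
  unfolding localization_iso_def
proof (intro allI impI)
  fix D :: "('o, ('o \<times> 'o \<times> ('m \<times> bool) list) set) category" and Fo F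
  assume D: "is_category D" and F: "is_functor C D Fo F" and inv: "\<forall>s\<in>S. is_iso D (F s)"
  have "is_iso D (F f)" using assms(1) D F inv unfolding localization_iso_def by blast
  then have "is_iso D (Comp D (F f) (F s))"
    using iso_comp[OF D inv[rule_format, OF assms(3)] _ functor_hom[OF F assms(4)] functor_hom[OF F assms(2)]]
    by blast
  then have "is_iso D (Comp D (F t) (F f'))"
    using functor_comp[OF F assms(4,2)] functor_comp[OF F assms(7,6)] assms(8) by simp
  then show "is_iso D (F f')"
    using iso_cancel_left[OF D inv[rule_format, OF assms(5)] _ functor_hom[OF F assms(6)] functor_hom[OF F assms(7)]]
    by blast
qed

section \<open>Categories of saturated relations\<close>

text \<open>The test categories in \<open>localization_iso\<close> have arrows of type \<open>('o \<times> 'o \<times> ('m \<times> bool) list) set\<close>.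
  A relation \<open>R\<close> between pairs of morphisms, seen as an arrow \<open>X \<rightarrow> X'\<close>, is encoded as such a set
  of triples tagged with \<open>X\<close> and \<open>X'\<close>; the extra triple \<open>(X, X', [])\<close> keeps the endpoints when
  \<open>R\<close> is empty.\<close>

definition pair_code :: "'m \<times> 'm \<Rightarrow> 'm \<times> 'm \<Rightarrow> ('m \<times> bool) list" where
  "pair_code p q = [(fst p, True), (snd p, True), (fst q, True), (snd q, True)]"

definition rel_arrow :: "'o \<Rightarrow> 'o \<Rightarrow> (('m \<times> 'm) \<times> ('m \<times> 'm)) set \<Rightarrow> ('o \<times> 'o \<times> ('m \<times> bool) list) set" where
  "rel_arrow X X' R = insert (X, X', []) {(X, X', pair_code p q) | p q. (p, q) \<in> R}"

definition arrow_rel :: "('o \<times> 'o \<times> ('m \<times> bool) list) set \<Rightarrow> (('m \<times> 'm) \<times> ('m \<times> 'm)) set" where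
  "arrow_rel M = {(p, q). \<exists>X X'. (X, X', pair_code p q) \<in> M}"

definition arrow_dom :: "('o \<times> 'o \<times> ('m \<times> bool) list) set \<Rightarrow> 'o" where
  "arrow_dom M = fst (SOME e. e \<in> M)"

definition arrow_cod :: "('o \<times> 'o \<times> ('m \<times> bool) list) set \<Rightarrow> 'o" where
  "arrow_cod M = fst (snd (SOME e. e \<in> M))"

lemma pair_code_eq_iff: "pair_code p q = pair_code p' q' \<longleftrightarrow> p = p' \<and> q = q'"
  unfolding pair_code_def by (cases p; cases q; cases p'; cases q') auto

lemma arrow_rel_rel_arrow [simp]: "arrow_rel (rel_arrow X X' R) = R"
  unfolding arrow_rel_def rel_arrow_def by (auto simp: pair_code_eq_iff pair_code_def)

lemma some_in_rel_arrow: "(SOME e. e \<in> rel_arrow X X' R) \<in> rel_arrow X X' R"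
  by (rule someI[of _ "(X, X', [])"]) (simp add: rel_arrow_def)

lemma arrow_dom_rel_arrow [simp]: "arrow_dom (rel_arrow X X' R) = X"
  using some_in_rel_arrow[of X X' R] unfolding arrow_dom_def rel_arrow_def by auto

lemma arrow_cod_rel_arrow [simp]: "arrow_cod (rel_arrow X X' R) = X'"
  using some_in_rel_arrow[of X X' R] unfolding arrow_cod_def rel_arrow_def by auto

lemma rel_arrow_eq_iff: "rel_arrow X X' R = rel_arrow Z Z' R' \<longleftrightarrow> X = Z \<and> X' = Z' \<and> R = R'"
  by (metis arrow_cod_rel_arrow arrow_dom_rel_arrow arrow_rel_rel_arrow)

definition saturated_rel ::
    "('o \<Rightarrow> 'p set) \<Rightarrow> ('p \<Rightarrow> 'p \<Rightarrow> bool) \<Rightarrow> 'o \<Rightarrow> 'o \<Rightarrow> ('p \<times> 'p) set \<Rightarrow> bool" where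
  "saturated_rel P eqv X X' R \<longleftrightarrow> R \<subseteq> P X \<times> P X' \<and>
     (\<forall>p q p' q'. (p, q) \<in> R \<longrightarrow> eqv p' p \<longrightarrow> eqv q q' \<longrightarrow> (p', q') \<in> R)"

definition equiv_on_carrier :: "('o \<Rightarrow> 'p set) \<Rightarrow> ('p \<Rightarrow> 'p \<Rightarrow> bool) \<Rightarrow> 'o \<Rightarrow> ('p \<times> 'p) set" where
  "equiv_on_carrier P eqv X = {(p, q). p \<in> P X \<and> q \<in> P X \<and> eqv p q}"

text \<open>Arrows of \<open>rel_category\<close> are relations saturated under \<open>eqv\<close>, that is, relations between
  equivalence classes, and identities are \<open>eqv\<close> itself; this avoids forming quotient sets.\<close>

definition rel_category ::
    "'o set \<Rightarrow> ('o \<Rightarrow> ('m \<times> 'm) set) \<Rightarrow> ('m \<times> 'm \<Rightarrow> 'm \<times> 'm \<Rightarrow> bool)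
     \<Rightarrow> ('o, ('o \<times> 'o \<times> ('m \<times> bool) list) set) category" where
  "rel_category Ob P eqv =
    \<lparr>Obj = Ob, Arr = {rel_arrow X X' R | X X' R. X \<in> Ob \<and> X' \<in> Ob \<and> saturated_rel P eqv X X' R},
     Dom = arrow_dom, Cod = arrow_cod, Id = (\<lambda>X. rel_arrow X X (equiv_on_carrier P eqv X)),
     Comp = (\<lambda>M2 M1. rel_arrow (arrow_dom M1) (arrow_cod M2) (arrow_rel M1 O arrow_rel M2))\<rparr>"

locale carrier_equiv =
  fixes Ob :: "'o set" and P :: "'o \<Rightarrow> ('m \<times> 'm) set" and eqv :: "'m \<times> 'm \<Rightarrow> 'm \<times> 'm \<Rightarrow> bool"
  assumes eqv_refl: "X \<in> Ob \<Longrightarrow> p \<in> P X \<Longrightarrow> eqv p p"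
    and eqv_sym: "eqv p q \<Longrightarrow> eqv q p"
    and eqv_trans: "eqv p q \<Longrightarrow> eqv q r \<Longrightarrow> eqv p r"
    and carrier_closed: "eqv p q \<Longrightarrow> p \<in> P X \<Longrightarrow> q \<in> P X"
begin

abbreviation "D \<equiv> rel_category Ob P eqv"

lemma D_simps [simp]:
  "Obj D = Ob" "Dom D = arrow_dom" "Cod D = arrow_cod"
  "Id D X = rel_arrow X X (equiv_on_carrier P eqv X)"
  "Comp D M2 M1 = rel_arrow (arrow_dom M1) (arrow_cod M2) (arrow_rel M1 O arrow_rel M2)"
  by (simp_all add: rel_category_def)

lemma rel_arrow_in_hom:
  "X \<in> Ob \<Longrightarrow> X' \<in> Ob \<Longrightarrow> saturated_rel P eqv X X' R \<Longrightarrow> rel_arrow X X' R \<in> hom D X X'"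
  unfolding hom_def by (auto simp: rel_category_def)

lemma homE:
  assumes "M \<in> hom D X X'"
  obtains R where "M = rel_arrow X X' R" "X \<in> Ob" "X' \<in> Ob" "saturated_rel P eqv X X' R"
  using assms unfolding hom_def by (auto simp: rel_category_def)

lemma saturated_equiv_on_carrier: "saturated_rel P eqv X X (equiv_on_carrier P eqv X)"
  unfolding saturated_rel_def equiv_on_carrier_def by (auto intro: eqv_trans eqv_sym carrier_closed dest: eqv_sym)

lemma saturated_relcomp:
  assumes Y: "Y \<in> Ob" and R1: "saturated_rel P eqv X Y R1" and R2: "saturated_rel P eqv Y Z R2"
  shows "saturated_rel P eqv X Z (R1 O R2)"
  unfolding saturated_rel_def
proof (intro conjI allI impI)
  show "R1 O R2 \<subseteq> P X \<times> P Z" using R1 R2 unfolding saturated_rel_def by blast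
  fix p q p' q' assume "(p, q) \<in> R1 O R2" "eqv p' p" "eqv q q'"
  moreover obtain m where m: "(p, m) \<in> R1" "(m, q) \<in> R2" using \<open>(p, q) \<in> R1 O R2\<close> by blast
  moreover have "eqv m m" using m R1 eqv_refl[OF Y] unfolding saturated_rel_def by blast
  ultimately show "(p', q') \<in> R1 O R2" using R1 R2 unfolding saturated_rel_def by blast
qed

lemma equiv_on_carrier_relcomp:
  assumes "X \<in> Ob" "X' \<in> Ob" "saturated_rel P eqv X X' R"
  shows "equiv_on_carrier P eqv X O R = R"
proof (intro set_eqI iffI)
  fix x assume "x \<in> R"
  moreover obtain p q where "x = (p, q)" by (cases x)
  moreover have "(p, p) \<in> equiv_on_carrier P eqv X" if "(p, q) \<in> R"
    using that assms eqv_refl unfolding saturated_rel_def equiv_on_carrier_def by blast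
  ultimately show "x \<in> equiv_on_carrier P eqv X O R" by blast
next
  fix x assume "x \<in> equiv_on_carrier P eqv X O R"
  then obtain p m q where "x = (p, q)" "eqv p m" "(m, q) \<in> R"
    unfolding equiv_on_carrier_def by blast
  moreover have "eqv q q" using \<open>(m, q) \<in> R\<close> assms eqv_refl unfolding saturated_rel_def by blast
  ultimately show "x \<in> R" using assms unfolding saturated_rel_def by blast
qed

lemma relcomp_equiv_on_carrier:
  assumes "X \<in> Ob" "X' \<in> Ob" "saturated_rel P eqv X X' R"
  shows "R O equiv_on_carrier P eqv X' = R"
proof (intro set_eqI iffI)
  fix x assume "x \<in> R"
  moreover obtain p q where "x = (p, q)" by (cases x)
  moreover have "(q, q) \<in> equiv_on_carrier P eqv X'" if "(p, q) \<in> R"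
    using that assms eqv_refl unfolding saturated_rel_def equiv_on_carrier_def by blast
  ultimately show "x \<in> R O equiv_on_carrier P eqv X'" by blast
next
  fix x assume "x \<in> R O equiv_on_carrier P eqv X'"
  then obtain p m q where "x = (p, q)" "(p, m) \<in> R" "eqv m q"
    unfolding equiv_on_carrier_def by blast
  moreover have "eqv p p" using \<open>(p, m) \<in> R\<close> assms eqv_refl unfolding saturated_rel_def by blast
  ultimately show "x \<in> R" using assms unfolding saturated_rel_def by blast
qed

lemma rel_category_is_category: "is_category D"
  unfolding is_category_def
proof (intro conjI ballI impI)
  fix f assume "f \<in> Arr D"
  then obtain X X' R where f: "f = rel_arrow X X' R" "X \<in> Ob" "X' \<in> Ob" "saturated_rel P eqv X X' R"
    by (auto simp: rel_category_def)
  show "Dom D f \<in> Obj D" "Cod D f \<in> Obj D" using f by simp_all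
  show "Comp D f (Id D (Dom D f)) = f" "Comp D (Id D (Cod D f)) f = f"
    using f equiv_on_carrier_relcomp[OF f(2-4)] relcomp_equiv_on_carrier[OF f(2-4)] by simp_all
  fix g assume "g \<in> Arr D" "Cod D f = Dom D g"
  then obtain Y' R' where g: "g = rel_arrow X' Y' R'" "Y' \<in> Ob" "saturated_rel P eqv X' Y' R'"
    using f by (auto simp: rel_category_def)
  show "Comp D g f \<in> hom D (Dom D f) (Cod D g)"
    using f g rel_arrow_in_hom saturated_relcomp by simp
next
  fix a assume "a \<in> Obj D"
  then show "Id D a \<in> hom D a a" using rel_arrow_in_hom saturated_equiv_on_carrier by simp
next
  fix f g h
  show "Comp D h (Comp D g f) = Comp D (Comp D h g) f" by (simp add: O_assoc)
qed

lemma iso_rel_arrow: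
  assumes "X \<in> Ob" "X' \<in> Ob" "saturated_rel P eqv X X' R"
    "R O R\<inverse> = equiv_on_carrier P eqv X" "R\<inverse> O R = equiv_on_carrier P eqv X'"
  shows "is_iso D (rel_arrow X X' R)"
proof (rule is_isoI)
  show "rel_arrow X X' R \<in> hom D X X'" using rel_arrow_in_hom assms(1-3) .
  have "saturated_rel P eqv X' X (R\<inverse>)" using assms(3) eqv_sym unfolding saturated_rel_def by blast
  then show "rel_arrow X' X (R\<inverse>) \<in> hom D X' X" using rel_arrow_in_hom assms(1,2) by blast
qed (use assms(4,5) in simp_all)

end

locale additive_cat =
  fixes E :: "('o, 'm) addcat"
  assumes additive: "is_additive E"
begin

abbreviation cmp (infixr "\<cdot>" 75) where "g \<cdot> f \<equiv> Comp E g f"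
abbreviation Hom where "Hom X Y \<equiv> hom E X Y"
abbreviation Z where "Z X Y \<equiv> Zero E X Y"
abbreviation plus_arr (infixl "\<oplus>" 65) where "f \<oplus> g \<equiv> Add E f g"
abbreviation minus_arr (infixl "\<ominus>" 65) where "f \<ominus> g \<equiv> Add E f (Neg E g)"

lemma is_cat: "is_category E"
  using additive unfolding is_additive_def by blast

lemmas hom_objs = hom_objs[OF is_cat]
  and comp_in_hom = comp_in_hom[OF is_cat]
  and comp_assoc = comp_assoc[OF is_cat]
  and id_in_hom = id_in_hom[OF is_cat]
  and comp_id_left [simp] = comp_id_left[OF is_cat]
  and comp_id_right [simp] = comp_id_right[OF is_cat]
  and iso_Id = iso_Id[OF is_cat]
  and comp_eq_precomp = comp_eq_precomp[OF is_cat]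

lemma arr_in_hom: "f \<in> Arr E \<Longrightarrow> f \<in> Hom (Dom E f) (Cod E f)"
  unfolding hom_def by simp

lemma zero_in_hom: "X \<in> Obj E \<Longrightarrow> Y \<in> Obj E \<Longrightarrow> Z X Y \<in> Hom X Y"
  using additive unfolding is_additive_def by blast

lemma add_in_hom: "f \<in> Hom X Y \<Longrightarrow> g \<in> Hom X Y \<Longrightarrow> f \<oplus> g \<in> Hom X Y"
  and neg_in_hom: "f \<in> Hom X Y \<Longrightarrow> Neg E f \<in> Hom X Y"
  and add_zero: "f \<in> Hom X Y \<Longrightarrow> f \<oplus> Z X Y = f"
  and add_neg: "f \<in> Hom X Y \<Longrightarrow> f \<ominus> f = Z X Y"
  and add_comm: "f \<in> Hom X Y \<Longrightarrow> g \<in> Hom X Y \<Longrightarrow> f \<oplus> g = g \<oplus> f"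
  and add_assoc: "f \<in> Hom X Y \<Longrightarrow> g \<in> Hom X Y \<Longrightarrow> h \<in> Hom X Y \<Longrightarrow> f \<oplus> g \<oplus> h = f \<oplus> (g \<oplus> h)"
  using additive hom_objs unfolding is_additive_def by blast+

lemma diff_in_hom: "f \<in> Hom X Y \<Longrightarrow> g \<in> Hom X Y \<Longrightarrow> f \<ominus> g \<in> Hom X Y"
  using add_in_hom neg_in_hom by blast

lemma comp_add: "f \<in> Hom X Y \<Longrightarrow> f' \<in> Hom X Y \<Longrightarrow> g \<in> Hom Y W \<Longrightarrow> g \<cdot> (f \<oplus> f') = g \<cdot> f \<oplus> g \<cdot> f'"
  and add_comp: "f \<in> Hom X Y \<Longrightarrow> g \<in> Hom Y W \<Longrightarrow> g' \<in> Hom Y W \<Longrightarrow> (g \<oplus> g') \<cdot> f = g \<cdot> f \<oplus> g' \<cdot> f"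
  using additive hom_objs[of f X Y] hom_objs[of g Y W] unfolding is_additive_def by blast+

lemma zero_add: assumes "f \<in> Hom X Y" shows "Z X Y \<oplus> f = f"
proof -
  have "Z X Y \<in> Hom X Y" using assms hom_objs zero_in_hom by blast
  then show ?thesis using add_comm[OF _ assms] add_zero[OF assms] by simp
qed

lemma idempotent_is_zero:
  assumes "x \<in> Hom X Y" "x \<oplus> x = x"
  shows "x = Z X Y"
proof -
  have "Z X Y = (x \<oplus> x) \<ominus> x" using assms add_neg by simp
  also have "\<dots> = x \<oplus> Z X Y" using add_assoc[OF assms(1,1) neg_in_hom[OF assms(1)]] add_neg[OF assms(1)] by simp
  finally show ?thesis using add_zero[OF assms(1)] by simp
qed

lemma comp_zero: assumes "g \<in> Hom Y W" "X \<in> Obj E" shows "g \<cdot> Z X Y = Z X W"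
proof -
  have z: "Z X Y \<in> Hom X Y" using assms hom_objs zero_in_hom by blast
  have "g \<cdot> Z X Y = g \<cdot> Z X Y \<oplus> g \<cdot> Z X Y"
    using comp_add[OF z z assms(1)] add_zero[OF z] by simp
  then show ?thesis using idempotent_is_zero comp_in_hom[OF z assms(1)] by simp
qed

lemma zero_comp: assumes "f \<in> Hom X Y" "W \<in> Obj E" shows "Z Y W \<cdot> f = Z X W"
proof -
  have z: "Z Y W \<in> Hom Y W" using assms hom_objs zero_in_hom by blast
  have "Z Y W \<cdot> f = Z Y W \<cdot> f \<oplus> Z Y W \<cdot> f"
    using add_comp[OF assms(1) z z] add_zero[OF z] by simp
  then show ?thesis using idempotent_is_zero comp_in_hom[OF assms(1) z] by simp
qed

lemma neg_add: "f \<in> Hom X Y \<Longrightarrow> Neg E f \<oplus> f = Z X Y"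
  using add_comm[OF neg_in_hom] add_neg by simp

lemma diff_eq_zero_iff:
  assumes "f \<in> Hom X Y" "g \<in> Hom X Y"
  shows "f \<ominus> g = Z X Y \<longleftrightarrow> f = g"
proof
  assume "f \<ominus> g = Z X Y"
  have "f = f \<oplus> (Neg E g \<oplus> g)" using neg_add[OF assms(2)] add_zero[OF assms(1)] by simp
  also have "\<dots> = (f \<ominus> g) \<oplus> g" using add_assoc[OF assms(1) neg_in_hom assms(2)] assms(2) by simp
  finally show "f = g" using \<open>f \<ominus> g = Z X Y\<close> zero_add[OF assms(2)] by simp
qed (use assms add_neg in simp)

lemma add_diff_cancel_left:
  assumes "f \<in> Hom X Y" "g \<in> Hom X Y"
  shows "f \<oplus> (g \<ominus> f) = g"
proof -
  have "f \<oplus> (g \<ominus> f) = (f \<ominus> f) \<oplus> g"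
    using add_comm[OF assms(2) neg_in_hom[OF assms(1)]] add_assoc[OF assms(1) neg_in_hom assms(2)] assms(1)
    by simp
  then show ?thesis using add_neg[OF assms(1)] zero_add[OF assms(2)] by simp
qed

lemma neg_unique:
  assumes "x \<in> Hom X Y" "y \<in> Hom X Y" "x \<oplus> y = Z X Y"
  shows "y = Neg E x"
proof -
  have "y = (y \<oplus> x) \<ominus> x"
    using add_assoc[OF assms(2,1) neg_in_hom[OF assms(1)]] add_neg[OF assms(1)] add_zero[OF assms(2)] by simp
  also have "\<dots> = Neg E x" using add_comm[OF assms(2,1)] assms(3) zero_add[OF neg_in_hom[OF assms(1)]] by simp
  finally show ?thesis .
qed

lemma comp_diff:
  assumes "f \<in> Hom X Y" "f' \<in> Hom X Y" "g \<in> Hom Y W"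
  shows "g \<cdot> (f \<ominus> f') = g \<cdot> f \<ominus> g \<cdot> f'"
proof -
  have "g \<cdot> f' \<oplus> g \<cdot> Neg E f' = Z X W"
    using comp_add[OF assms(2) neg_in_hom[OF assms(2)] assms(3)] add_neg[OF assms(2)]
      comp_zero[OF assms(3)] hom_objs[OF assms(1)] by simp
  then have "g \<cdot> Neg E f' = Neg E (g \<cdot> f')"
    using neg_unique comp_in_hom assms neg_in_hom by blast
  then show ?thesis using comp_add[OF assms(1) neg_in_hom[OF assms(2)] assms(3)] by simp
qed

lemma diff_comp:
  assumes "f \<in> Hom X Y" "g \<in> Hom Y W" "g' \<in> Hom Y W"
  shows "(g \<ominus> g') \<cdot> f = g \<cdot> f \<ominus> g' \<cdot> f"
proof -
  have "g' \<cdot> f \<oplus> Neg E g' \<cdot> f = Z X W"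
    using add_comp[OF assms(1,3) neg_in_hom[OF assms(3)]] add_neg[OF assms(3)]
      zero_comp[OF assms(1)] hom_objs[OF assms(2)] by simp
  then have "Neg E g' \<cdot> f = Neg E (g' \<cdot> f)"
    using neg_unique comp_in_hom assms neg_in_hom by blast
  then show ?thesis using add_comp[OF assms(1,2) neg_in_hom[OF assms(3)]] by simp
qed

lemma comp_eq_self_if_complement_vanishes:
  assumes e: "e \<in> Hom K W" and c: "c \<in> Hom W K" and a: "a \<in> Hom A0 K" and b: "b \<in> Hom K A0"
    and ab: "Id E K \<ominus> c \<cdot> e = a \<cdot> b" and i: "i \<in> Hom V K" and bi: "b \<cdot> i = Z V A0"
  shows "c \<cdot> (e \<cdot> i) = i"
proof -
  have ce: "c \<cdot> e \<in> Hom K K" using comp_in_hom[OF e c] .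
  have "i = (c \<cdot> e \<oplus> a \<cdot> b) \<cdot> i"
    using add_diff_cancel_left[OF ce id_in_hom] ab i hom_objs[OF i] by simp
  also have "\<dots> = c \<cdot> (e \<cdot> i) \<oplus> a \<cdot> (b \<cdot> i)"
    using add_comp[OF i ce comp_in_hom[OF b a]] comp_assoc[OF i e c] comp_assoc[OF i b a] by simp
  also have "\<dots> = c \<cdot> (e \<cdot> i)"
    using bi comp_zero[OF a] hom_objs[OF i] add_zero[OF comp_in_hom[OF comp_in_hom[OF i e] c]] by simp
  finally show ?thesis by simp
qed

lemma mono_cancel:
  "is_mono E m \<Longrightarrow> m \<in> Hom X Y \<Longrightarrow> g \<in> Hom T X \<Longrightarrow> h \<in> Hom T X \<Longrightarrow> m \<cdot> g = m \<cdot> h \<Longrightarrow> g = h"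
  unfolding is_mono_def hom_def by auto

lemma iso_cancel:
  assumes "is_iso E \<phi>" "\<phi> \<in> Hom X Y" "g \<in> Hom T X" "h \<in> Hom T X" "\<phi> \<cdot> g = \<phi> \<cdot> h"
  shows "g = h"
proof -
  obtain \<psi> where \<psi>: "\<psi> \<in> Hom Y X" "\<psi> \<cdot> \<phi> = Id E X" using is_isoE[OF assms(1,2)] by blast
  have "\<psi> \<cdot> (\<phi> \<cdot> g) = g" "\<psi> \<cdot> (\<phi> \<cdot> h) = h"
    using comp_assoc[OF assms(3,2) \<psi>(1)] comp_assoc[OF assms(4,2) \<psi>(1)] \<psi>(2) assms(3,4) by simp_all
  then show ?thesis using assms(5) by metis
qed

lemma zero_object_ex: "\<exists>z. zero_object E z"
  using additive unfolding is_additive_def by blast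

lemma zero_object_obj: "zero_object E z \<Longrightarrow> z \<in> Obj E"
  unfolding zero_object_def by blast

lemma zero_object_hom_to: assumes "zero_object E z" "g \<in> Hom T z" shows "g = Z T z"
proof -
  have "T \<in> Obj E" "z \<in> Obj E" using hom_objs[OF assms(2)] by auto
  then show ?thesis using assms zero_in_hom unfolding zero_object_def by blast
qed

lemma zero_objectI:
  assumes "X \<in> Obj E" "Id E X = Z X X"
  shows "zero_object E X"
  unfolding zero_object_def
proof (intro conjI ballI assms(1))
  fix T assume T: "T \<in> Obj E"
  have "g = Z X T" if "g \<in> Hom X T" for g
    using comp_id_right[OF that] comp_zero[OF that assms(1)] assms(2) by simp
  then show "\<exists>!g. g \<in> Hom X T" using zero_in_hom[OF assms(1) T] by blast
  have "g = Z T X" if "g \<in> Hom T X" for g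
    using comp_id_left[OF that] zero_comp[OF that assms(1)] assms(2) by simp
  then show "\<exists>!g. g \<in> Hom T X" using zero_in_hom[OF T assms(1)] by blast
qed

lemma zero_objects_iso:
  assumes "zero_object E z" "zero_object E z'"
  shows "is_iso E (Z z z')"
proof (rule is_isoI)
  have O: "z \<in> Obj E" "z' \<in> Obj E" using assms zero_object_obj by auto
  show zz': "Z z z' \<in> Hom z z'" and z'z: "Z z' z \<in> Hom z' z" using zero_in_hom O by auto
  show "Z z' z \<cdot> Z z z' = Id E z"
    using zero_object_hom_to[OF assms(1) comp_in_hom[OF zz' z'z]] zero_object_hom_to[OF assms(1) id_in_hom[OF O(1)]]
    by simp
  show "Z z z' \<cdot> Z z' z = Id E z'"
    using zero_object_hom_to[OF assms(2) comp_in_hom[OF z'z zz']] zero_object_hom_to[OF assms(2) id_in_hom[OF O(2)]]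
    by simp
qed

end

locale conflation_cat =
  fixes E :: "('o, 'm) addcat" and Conf :: "('m \<times> 'm) set"
  assumes conflation: "conflation_category E Conf"

sublocale conflation_cat \<subseteq> additive_cat
  using conflation unfolding conflation_category_def by unfold_locales blast

context conflation_cat
begin

lemma kernel_cokernel: "(i, p) \<in> Conf \<Longrightarrow> kernel_cokernel_pair E i p"
  using conflation unfolding conflation_category_def by blast

lemma conflation_homs:
  assumes "(i, p) \<in> Conf"
  shows "i \<in> Hom (Dom E i) (Cod E i)" "p \<in> Hom (Cod E i) (Cod E p)" "p \<cdot> i = Z (Dom E i) (Cod E p)"
  using kernel_cokernel[OF assms] unfolding kernel_cokernel_pair_def is_kernel_def hom_def by auto

lemma kernel_univ:
  assumes "(i, p) \<in> Conf" "i \<in> Hom K X" "p \<in> Hom X Q" "g \<in> Hom T X" "p \<cdot> g = Z T Q"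
  shows "\<exists>!h. h \<in> Hom T K \<and> i \<cdot> h = g"
proof -
  have "\<forall>g\<in>Arr E. Cod E g = Dom E p \<longrightarrow> p \<cdot> g = Z (Dom E g) (Cod E p) \<longrightarrow>
      (\<exists>!h. h \<in> Hom (Dom E g) (Dom E i) \<and> i \<cdot> h = g)"
    using kernel_cokernel[OF assms(1)] unfolding kernel_cokernel_pair_def is_kernel_def by blast
  moreover have "g \<in> Arr E" "Cod E g = Dom E p" and d: "Dom E g = T" "Dom E i = K" "Cod E p = Q"
    using assms(2-4) unfolding hom_def by auto
  moreover have "p \<cdot> g = Z (Dom E g) (Cod E p)" using assms(5) d by simp
  ultimately have "\<exists>!h. h \<in> Hom (Dom E g) (Dom E i) \<and> i \<cdot> h = g" by blast
  then show ?thesis using d by simp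
qed

lemma kernel_lift:
  assumes "(i, p) \<in> Conf" "i \<in> Hom K X" "p \<in> Hom X Q" "g \<in> Hom T X" "p \<cdot> g = Z T Q"
  obtains h where "h \<in> Hom T K" "i \<cdot> h = g"
  using kernel_univ[OF assms] by blast

lemma kernel_cancel:
  assumes "(i, p) \<in> Conf" "i \<in> Hom K X" "g \<in> Hom T K" "h \<in> Hom T K" "i \<cdot> g = i \<cdot> h"
  shows "g = h"
proof -
  define Q where "Q = Cod E p"
  have p: "p \<in> Hom X Q" "p \<cdot> i = Z K Q"
    using conflation_homs[OF assms(1)] assms(2) unfolding Q_def hom_def by auto
  have "p \<cdot> (i \<cdot> g) = Z T Q"
    using comp_assoc[OF assms(3,2) p(1)] p(2) zero_comp[OF assms(3)] hom_objs[OF p(1)] by simp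
  then have U: "\<exists>!k. k \<in> Hom T K \<and> i \<cdot> k = i \<cdot> g"
    using kernel_univ[OF assms(1,2) p(1) comp_in_hom[OF assms(3,2)]] by blast
  show ?thesis using the1_equality[OF U, of g] the1_equality[OF U, of h] assms(3-5) by simp
qed

lemma kernel_lift_through_mono:
  assumes "(i, d) \<in> Conf" "i \<in> Hom V K" "d \<in> Hom K A1" "m \<in> Hom A1 A0" "is_mono E m"
    "g \<in> Hom T K" "(m \<cdot> d) \<cdot> g = Z T A0"
  obtains \<kappa> where "\<kappa> \<in> Hom T V" "i \<cdot> \<kappa> = g"
proof -
  have O: "T \<in> Obj E" "A1 \<in> Obj E" using hom_objs assms(3,6) by blast+
  have "m \<cdot> (d \<cdot> g) = m \<cdot> Z T A1" using comp_assoc[OF assms(6,3,4)] assms(7) comp_zero[OF assms(4) O(1)] by simp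
  then have "d \<cdot> g = Z T A1" by (rule mono_cancel[OF assms(5,4) comp_in_hom[OF assms(6,3)] zero_in_hom[OF O]])
  then show ?thesis using kernel_lift[OF assms(1-3,6)] that by blast
qed

lemma cokernel_univ:
  assumes "(i, p) \<in> Conf" "i \<in> Hom K X" "p \<in> Hom X Q" "g \<in> Hom X T" "g \<cdot> i = Z K T"
  shows "\<exists>!h. h \<in> Hom Q T \<and> h \<cdot> p = g"
proof -
  have "\<forall>g\<in>Arr E. Dom E g = Cod E i \<longrightarrow> g \<cdot> i = Z (Dom E i) (Cod E g) \<longrightarrow>
      (\<exists>!h. h \<in> Hom (Cod E p) (Cod E g) \<and> h \<cdot> p = g)"
    using kernel_cokernel[OF assms(1)] unfolding kernel_cokernel_pair_def is_cokernel_def by blast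
  moreover have "g \<in> Arr E" "Dom E g = Cod E i" and d: "Cod E g = T" "Dom E i = K" "Cod E p = Q"
    using assms(2-4) unfolding hom_def by auto
  moreover have "g \<cdot> i = Z (Dom E i) (Cod E g)" using assms(5) d by simp
  ultimately have "\<exists>!h. h \<in> Hom (Cod E p) (Cod E g) \<and> h \<cdot> p = g" by blast
  then show ?thesis using d by simp
qed

lemma cokernel_desc:
  assumes "(i, p) \<in> Conf" "i \<in> Hom K X" "p \<in> Hom X Q" "g \<in> Hom X T" "g \<cdot> i = Z K T"
  obtains h where "h \<in> Hom Q T" "h \<cdot> p = g"
  using cokernel_univ[OF assms] by blast

lemma cokernel_cancel:
  assumes "(i, p) \<in> Conf" "p \<in> Hom X Q" "g \<in> Hom Q T" "h \<in> Hom Q T" "g \<cdot> p = h \<cdot> p"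
  shows "g = h"
proof -
  define K where "K = Dom E i"
  have i: "i \<in> Hom K X" "p \<cdot> i = Z K Q"
    using conflation_homs[OF assms(1)] assms(2) unfolding K_def hom_def by auto
  have "(g \<cdot> p) \<cdot> i = Z K T"
    using comp_assoc[OF i(1) assms(2,3), symmetric] i(2) comp_zero[OF assms(3)] hom_objs[OF i(1)] by simp
  then have U: "\<exists>!k. k \<in> Hom Q T \<and> k \<cdot> p = g \<cdot> p"
    using cokernel_univ[OF assms(1) i(1) assms(2) comp_in_hom[OF assms(2,3)]] by blast
  show ?thesis using the1_equality[OF U, of g] the1_equality[OF U, of h] assms(3-5) by simp
qed

lemma conflation_iso_closed:
  assumes "(i, p) \<in> Conf" "i \<in> Hom K X" "p \<in> Hom X Q" "i' \<in> Hom K' X'" "p' \<in> Hom X' Q'"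
    "a \<in> Hom K K'" "b \<in> Hom X X'" "c \<in> Hom Q Q'" "is_iso E a" "is_iso E b" "is_iso E c"
    "b \<cdot> i = i' \<cdot> a" "c \<cdot> p = p' \<cdot> b"
  shows "(i', p') \<in> Conf"
proof -
  have "\<forall>(i, p)\<in>Conf. \<forall>i'\<in>Arr E. \<forall>p'\<in>Arr E. \<forall>a b c. Cod E i' = Dom E p' \<longrightarrow>
      a \<in> Hom (Dom E i) (Dom E i') \<longrightarrow> b \<in> Hom (Cod E i) (Cod E i') \<longrightarrow> c \<in> Hom (Cod E p) (Cod E p') \<longrightarrow>
      is_iso E a \<longrightarrow> is_iso E b \<longrightarrow> is_iso E c \<longrightarrow> b \<cdot> i = i' \<cdot> a \<longrightarrow> c \<cdot> p = p' \<cdot> b \<longrightarrow> (i', p') \<in> Conf"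
    using conflation unfolding conflation_category_def by (elim conjE)
  note closed = bspec[OF this assms(1), unfolded case_prod_conv, rule_format]
  show ?thesis
    by (rule closed[of i' p' a b c]) (use assms(2-13) in \<open>simp_all add: hom_def\<close>)
qed

lemma pullback_kernel_iso:
  assumes ks: "(k, s) \<in> Conf" and pb: "is_pullback E s g f' p'" and ip: "(i', p') \<in> Conf"
  obtains \<gamma> where "\<gamma> \<in> Hom (Dom E k) (Dom E i')" "is_iso E \<gamma>"
proof -
  define K V Y X P K' where "K = Dom E k" and "V = Dom E s" and "Y = Cod E s" and "X = Dom E g"
    and "P = Dom E f'" and "K' = Dom E i'"
  have s: "s \<in> Hom V Y" and g: "g \<in> Hom X Y" and f': "f' \<in> Hom P V" and p': "p' \<in> Hom P X"
    and sq: "s \<cdot> f' = g \<cdot> p'"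
    using pb unfolding is_pullback_def hom_def K_def V_def Y_def X_def P_def by (elim conjE; simp)+
  have k: "k \<in> Hom K V" "s \<cdot> k = Z K Y" using conflation_homs[OF ks] s unfolding K_def hom_def by auto
  have i': "i' \<in> Hom K' P" "p' \<cdot> i' = Z K' X" using conflation_homs[OF ip] p' unfolding K'_def hom_def by auto
  have O: "K \<in> Obj E" "K' \<in> Obj E" "X \<in> Obj E" using hom_objs k(1) i'(1) g by blast+
  have "s \<cdot> (f' \<cdot> i') = Z K' Y"
    using comp_assoc[OF i'(1) f' s] comp_assoc[OF i'(1) p' g] sq i'(2) comp_zero[OF g O(2)] by simp
  then obtain \<alpha> where \<alpha>: "\<alpha> \<in> Hom K' K" "k \<cdot> \<alpha> = f' \<cdot> i'"
    using kernel_lift[OF ks k(1) s comp_in_hom[OF i'(1) f']] by blast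
  note univ = pullback_univ[OF pb s g f' p']
  have "s \<cdot> k = g \<cdot> Z K X" using k(2) comp_zero[OF g O(1)] by simp
  then obtain \<beta> where \<beta>: "\<beta> \<in> Hom K P" "f' \<cdot> \<beta> = k" "p' \<cdot> \<beta> = Z K X"
    using univ[OF k(1) zero_in_hom[OF O(1,3)]] by blast
  obtain \<gamma> where \<gamma>: "\<gamma> \<in> Hom K K'" "i' \<cdot> \<gamma> = \<beta>" using kernel_lift[OF ip i'(1) p' \<beta>(1,3)] .
  have "k \<cdot> (\<alpha> \<cdot> \<gamma>) = k \<cdot> Id E K"
    using comp_assoc[OF \<gamma>(1) \<alpha>(1) k(1)] \<alpha>(2) comp_assoc[OF \<gamma>(1) i'(1) f'] \<gamma>(2) \<beta>(2) k(1) by simp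
  then have \<alpha>\<gamma>: "\<alpha> \<cdot> \<gamma> = Id E K"
    using kernel_cancel[OF ks k(1) comp_in_hom[OF \<gamma>(1) \<alpha>(1)] id_in_hom[OF O(1)]] by blast
  have "s \<cdot> (f' \<cdot> i') = g \<cdot> (p' \<cdot> i')" using comp_assoc[OF i'(1) f' s] comp_assoc[OF i'(1) p' g] sq by simp
  then have U: "\<exists>!c. c \<in> Hom K' P \<and> f' \<cdot> c = f' \<cdot> i' \<and> p' \<cdot> c = p' \<cdot> i'"
    using univ[OF comp_in_hom[OF i'(1) f'] comp_in_hom[OF i'(1) p']] by blast
  have "f' \<cdot> (\<beta> \<cdot> \<alpha>) = f' \<cdot> i'" "p' \<cdot> (\<beta> \<cdot> \<alpha>) = p' \<cdot> i'"
    using comp_assoc[OF \<alpha>(1) \<beta>(1) f'] comp_assoc[OF \<alpha>(1) \<beta>(1) p'] \<beta>(2,3) \<alpha>(2) i'(2)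
      zero_comp[OF \<alpha>(1) O(3)] by simp_all
  then have "\<beta> \<cdot> \<alpha> = i'"
    using U comp_in_hom[OF \<alpha>(1) \<beta>(1)] i'(1) by (metis (no_types, lifting))
  then have "i' \<cdot> (\<gamma> \<cdot> \<alpha>) = i' \<cdot> Id E K'" using comp_assoc[OF \<alpha>(1) \<gamma>(1) i'(1)] \<gamma>(2) i'(1) by simp
  then have "\<gamma> \<cdot> \<alpha> = Id E K'"
    using kernel_cancel[OF ip i'(1) comp_in_hom[OF \<alpha>(1) \<gamma>(1)] id_in_hom[OF O(2)]] by blast
  then show ?thesis using that[OF \<gamma>(1)[unfolded K_def K'_def]] is_isoI[OF \<gamma>(1) \<alpha>(1) \<alpha>\<gamma>] by simp
qed

lemma pushout_cokernel_iso:
  assumes uq: "(u, q) \<in> Conf" and po: "is_pushout E d u i' p'" and ic: "(i', c') \<in> Conf"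
  obtains \<zeta> where "\<zeta> \<in> Hom (Cod E q) (Cod E c')" "is_iso E \<zeta>"
proof -
  define V K A1 P A0 C where "V = Dom E u" and "K = Cod E u" and "A1 = Cod E d" and "P = Cod E i'"
    and "A0 = Cod E q" and "C = Cod E c'"
  have u: "u \<in> Hom V K" and q: "q \<in> Hom K A0" and qu: "q \<cdot> u = Z V A0"
    using conflation_homs[OF uq] unfolding V_def K_def A0_def by auto
  have d: "d \<in> Hom V A1" and i': "i' \<in> Hom A1 P" and p': "p' \<in> Hom K P" and sq: "i' \<cdot> d = p' \<cdot> u"
    using po u unfolding is_pushout_def hom_def V_def K_def A1_def P_def by (elim conjE; simp)+
  have c': "c' \<in> Hom P C" and ci: "c' \<cdot> i' = Z A1 C"
    using conflation_homs[OF ic] i' unfolding C_def hom_def by auto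
  have O: "V \<in> Obj E" "A1 \<in> Obj E" "A0 \<in> Obj E" "C \<in> Obj E" using hom_objs d q c' by blast+
  note univ = pushout_univ[OF po d u i' p']
  have "(c' \<cdot> p') \<cdot> u = Z V C"
    using comp_assoc[OF u p' c', symmetric] sq[symmetric] comp_assoc[OF d i' c'] ci zero_comp[OF d O(4)] by simp
  then obtain \<zeta> where \<zeta>: "\<zeta> \<in> Hom A0 C" "\<zeta> \<cdot> q = c' \<cdot> p'"
    using cokernel_desc[OF uq u q comp_in_hom[OF p' c']] by blast
  have "Z A1 A0 \<cdot> d = q \<cdot> u" using qu zero_comp[OF d O(3)] by simp
  then obtain \<eta> where \<eta>: "\<eta> \<in> Hom P A0" "\<eta> \<cdot> i' = Z A1 A0" "\<eta> \<cdot> p' = q"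
    using univ[OF zero_in_hom[OF O(2,3)] q] by blast
  obtain \<xi> where \<xi>: "\<xi> \<in> Hom C A0" "\<xi> \<cdot> c' = \<eta>" using cokernel_desc[OF ic i' c' \<eta>(1,2)] .
  have "(\<xi> \<cdot> \<zeta>) \<cdot> q = Id E A0 \<cdot> q"
    using comp_assoc[OF q \<zeta>(1) \<xi>(1), symmetric] \<zeta>(2) comp_assoc[OF p' c' \<xi>(1)] \<xi>(2) \<eta>(3) q by simp
  then have \<xi>\<zeta>: "\<xi> \<cdot> \<zeta> = Id E A0"
    using cokernel_cancel[OF uq q comp_in_hom[OF \<zeta>(1) \<xi>(1)] id_in_hom[OF O(3)]] by blast
  have "(\<zeta> \<cdot> \<eta>) \<cdot> i' = c' \<cdot> i'" "(\<zeta> \<cdot> \<eta>) \<cdot> p' = c' \<cdot> p'"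
    using comp_assoc[OF i' \<eta>(1) \<zeta>(1), symmetric] \<eta>(2) comp_zero[OF \<zeta>(1) O(2)] ci
      comp_assoc[OF p' \<eta>(1) \<zeta>(1), symmetric] \<eta>(3) \<zeta>(2) by simp_all
  moreover have "(c' \<cdot> i') \<cdot> d = (c' \<cdot> p') \<cdot> u"
    using comp_assoc[OF d i' c', symmetric] comp_assoc[OF u p' c', symmetric] sq by simp
  ultimately have "\<zeta> \<cdot> \<eta> = c'"
    using univ[OF comp_in_hom[OF i' c'] comp_in_hom[OF p' c']] comp_in_hom[OF \<eta>(1) \<zeta>(1)] c'
    by (metis (no_types, lifting))
  then have "(\<zeta> \<cdot> \<xi>) \<cdot> c' = Id E C \<cdot> c'"
    using comp_assoc[OF c' \<xi>(1) \<zeta>(1), symmetric] \<xi>(2) c' by simp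
  then have "\<zeta> \<cdot> \<xi> = Id E C"
    using cokernel_cancel[OF ic c' comp_in_hom[OF \<xi>(1) \<zeta>(1)] id_in_hom[OF O(4)]] by blast
  then show ?thesis using that \<zeta>(1) is_isoI[OF \<zeta>(1) \<xi>(1) \<xi>\<zeta>] unfolding A0_def C_def by blast
qed

end

locale right_exact_cat =
  fixes E :: "('o, 'm) addcat" and Conf :: "('m \<times> 'm) set"
  assumes right_exact: "right_exact E Conf"

sublocale right_exact_cat \<subseteq> conflation_cat
  using right_exact unfolding right_exact_def by unfold_locales blast

context right_exact_cat
begin

lemma deflation_pullback:
  assumes "(i, p) \<in> Conf" "g \<in> Arr E" "Cod E g = Cod E p"
  obtains p' g' i' where "is_pullback E p g g' p'" "(i', p') \<in> Conf"
  using right_exact assms unfolding right_exact_def deflation_def by metis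

(* Pulling back the deflation 1 of a zero object z along Y \<rightarrow> z gives a deflation that is an
   isomorphism; \<phi> differs from it by an isomorphism of conflations. *)
lemma iso_is_deflation:
  assumes "is_iso E \<phi>" "\<phi> \<in> Hom X Y"
  obtains i where "(i, \<phi>) \<in> Conf"
proof -
  obtain z where z: "zero_object E z" using zero_object_ex by blast
  have O: "z \<in> Obj E" "Y \<in> Obj E" using z zero_object_obj hom_objs[OF assms(2)] by auto
  have Yz: "Z Y z \<in> Hom Y z" and idz: "Id E z \<in> Hom z z" using zero_in_hom[OF O(2,1)] id_in_hom[OF O(1)] .
  obtain i0 where "(i0, Id E z) \<in> Conf" using right_exact z unfolding right_exact_def deflation_def by blast
  moreover have "Z Y z \<in> Arr E" "Cod E (Z Y z) = Cod E (Id E z)" using Yz idz unfolding hom_def by auto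
  ultimately obtain q g' i' where pb: "is_pullback E (Id E z) (Z Y z) g' q" and iq: "(i', q) \<in> Conf"
    by (rule deflation_pullback)
  have q_iso: "is_iso E q" using pullback_of_identity_is_iso[OF is_cat Yz pb] .
  define K P where "K = Dom E i'" and "P = Cod E i'"
  have i': "i' \<in> Hom K P" and q: "q \<in> Hom P Y"
    using conflation_homs[OF iq] pb Yz unfolding is_pullback_def hom_def K_def P_def by auto
  obtain \<psi> where \<psi>: "\<psi> \<in> Hom Y X" "\<psi> \<cdot> \<phi> = Id E X" "\<phi> \<cdot> \<psi> = Id E Y" using is_isoE[OF assms] .
  have b_iso: "is_iso E (\<psi> \<cdot> q)" using iso_comp[OF is_cat q_iso is_isoI[OF \<psi>(1) assms(2) \<psi>(3,2)] q \<psi>(1)] .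
  have K: "K \<in> Obj E" using hom_objs[OF i'] by simp
  have "(\<psi> \<cdot> q \<cdot> i', \<phi>) \<in> Conf"
  proof (rule conflation_iso_closed[OF iq i' q _ assms(2) id_in_hom[OF K] _ id_in_hom[OF O(2)]
        iso_Id[OF K] b_iso iso_Id[OF O(2)]])
    show "\<psi> \<cdot> q \<cdot> i' \<in> Hom K X" using comp_in_hom i' q \<psi>(1) by blast
    then show "(\<psi> \<cdot> q) \<cdot> i' = (\<psi> \<cdot> q \<cdot> i') \<cdot> Id E K" using comp_assoc[OF i' q \<psi>(1)] by simp
    show "\<psi> \<cdot> q \<in> Hom P X" using comp_in_hom q \<psi>(1) by blast
    show "Id E Y \<cdot> q = \<phi> \<cdot> \<psi> \<cdot> q" using comp_assoc[OF q \<psi>(1) assms(2)] \<psi>(3) q by simp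
  qed
  then show ?thesis using that by blast
qed

end

section \<open>Strongly right percolating subcategories\<close>

locale percolating_cat = right_exact_cat E Conf
  for E :: "('o, 'm) addcat" and Conf :: "('m \<times> 'm) set" +
  fixes A :: "'o set"
  assumes percolating: "strongly_right_percolating E Conf A"
begin

abbreviation S where "S \<equiv> S_A E Conf A"

lemma A_subset: "A \<subseteq> Obj E" and A_nonempty: "A \<noteq> {}"
  using percolating unfolding strongly_right_percolating_def right_percolating_def by (elim conjE; simp)+

lemma conflation_A_iff: "(i, p) \<in> Conf \<Longrightarrow> Cod E i \<in> A \<longleftrightarrow> Dom E i \<in> A \<and> Cod E p \<in> A"
proof -
  have "\<forall>(i, p)\<in>Conf. Cod E i \<in> A \<longleftrightarrow> Dom E i \<in> A \<and> Cod E p \<in> A"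
    using percolating unfolding strongly_right_percolating_def right_percolating_def by (elim conjE)
  then show "(i, p) \<in> Conf \<Longrightarrow> ?thesis" by fast
qed

lemma S_A_inflation: "(i, p) \<in> Conf \<Longrightarrow> Cod E p \<in> A \<Longrightarrow> i \<in> S"
  by (rule S_A.inf) (auto simp: A_inflation_def)

lemma S_A_deflation: "(i, p) \<in> Conf \<Longrightarrow> Dom E i \<in> A \<Longrightarrow> p \<in> S"
  by (rule S_A.defl) (auto simp: A_deflation_def)

lemma S_comp: "s \<in> S \<Longrightarrow> t \<in> S \<Longrightarrow> s \<in> Hom X Y \<Longrightarrow> t \<in> Hom Y W \<Longrightarrow> t \<cdot> s \<in> S"
  by (rule S_A.comp) (auto simp: hom_def)

lemma S_in_hom: "s \<in> S \<Longrightarrow> s \<in> Hom (Dom E s) (Cod E s)"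
proof (induction rule: S_A.induct)
  case (inf s)
  then show ?case using conflation_homs(1) unfolding A_inflation_def by blast
next
  case (defl s)
  then show ?case using conflation_homs(1,2) unfolding A_deflation_def hom_def by blast
next
  case (comp s t)
  then show ?case using comp_in_hom[of s "Dom E s" "Dom E t" t "Cod E t"] unfolding hom_def by auto
qed

lemma strong_P2E:
  assumes "f \<in> Hom X Y" "Y \<in> A"
  obtains W A1 i p m where "(i, p) \<in> Conf" "i \<in> Hom W X" "p \<in> Hom X A1" "A1 \<in> A" "m \<in> Hom A1 Y"
    "m \<cdot> p = f" "is_mono E m" "i \<in> S" "f \<cdot> i = Z W Y"
proof -
  have "\<forall>f\<in>Arr E. Cod E f \<in> A \<longrightarrow> (\<exists>p m. deflation Conf p \<and> Dom E p = Dom E f \<and> Cod E p \<in> A \<and>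
      m \<in> Hom (Cod E p) (Cod E f) \<and> m \<cdot> p = f \<and> is_mono E m)"
    using percolating unfolding strongly_right_percolating_def strong_P2_def by (elim conjE)
  then obtain p m i where ip: "(i, p) \<in> Conf" and p: "Dom E p = X" "Cod E p \<in> A"
    and m: "m \<in> Hom (Cod E p) Y" "m \<cdot> p = f" "is_mono E m"
    using assms unfolding deflation_def hom_def by auto
  define W A1 where "W = Dom E i" and "A1 = Cod E p"
  have i: "i \<in> Hom W X" and p': "p \<in> Hom X A1" and pi: "p \<cdot> i = Z W A1"
    using conflation_homs[OF ip] p unfolding W_def A1_def hom_def by auto
  have "f \<cdot> i = Z W Y"
    using m(2) comp_assoc[OF i p' m(1)[folded A1_def], symmetric] pi comp_zero[OF m(1)[folded A1_def]]
      hom_objs[OF i] by simp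
  then show ?thesis
    using that[OF ip i p' _ m(1)[folded A1_def] m(2,3) S_A_inflation[OF ip]] p(2) unfolding A1_def by blast
qed

lemma iso_preserves_A:
  assumes "is_iso E \<phi>" "\<phi> \<in> Hom X Y" "X \<in> A"
  shows "Y \<in> A"
proof -
  obtain i where i: "(i, \<phi>) \<in> Conf" using iso_is_deflation[OF assms(1,2)] .
  have "Cod E i = X" "Cod E \<phi> = Y" using conflation_homs(2)[OF i] assms(2) unfolding hom_def by auto
  then show ?thesis using conflation_A_iff[OF i] assms(3) by simp
qed

lemma kernel_of_iso_is_zero:
  assumes "(i, \<phi>) \<in> Conf" "is_iso E \<phi>"
  shows "zero_object E (Dom E i)"
proof -
  define K X Y where "K = Dom E i" and "X = Cod E i" and "Y = Cod E \<phi>"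
  have i: "i \<in> Hom K X" and \<phi>: "\<phi> \<in> Hom X Y" and \<phi>i: "\<phi> \<cdot> i = Z K Y"
    using conflation_homs[OF assms(1)] unfolding K_def X_def Y_def by auto
  have O: "K \<in> Obj E" "X \<in> Obj E" using hom_objs[OF i] by auto
  have "i = Z K X"
    using iso_cancel[OF assms(2) \<phi> i zero_in_hom[OF O]] \<phi>i comp_zero[OF \<phi> O(1)] by simp
  then have "i \<cdot> Id E K = i \<cdot> Z K K" using comp_zero[OF i O(1)] i by simp
  then have "Id E K = Z K K"
    using kernel_cancel[OF assms(1) i id_in_hom[OF O(1)] zero_in_hom[OF O(1,1)]] by simp
  then show ?thesis using zero_objectI[OF O(1)] unfolding K_def by simp
qed

lemma zero_object_in_A:
  assumes "zero_object E z"
  shows "z \<in> A"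
proof -
  obtain a where a: "a \<in> A" "a \<in> Obj E" using A_nonempty A_subset by blast
  obtain k where k: "(k, Id E a) \<in> Conf" using iso_is_deflation[OF iso_Id id_in_hom] a(2) by blast
  have "Cod E k = a" "Cod E (Id E a) = a" using conflation_homs[OF k] id_in_hom[OF a(2)] unfolding hom_def by auto
  then have "Dom E k \<in> A" using conflation_A_iff[OF k] a(1) by simp
  moreover have "zero_object E (Dom E k)" using kernel_of_iso_is_zero[OF k iso_Id[OF a(2)]] .
  ultimately show ?thesis
    using iso_preserves_A[OF zero_objects_iso zero_in_hom] assms zero_object_obj by blast
qed

lemma iso_in_S:
  assumes "is_iso E \<phi>" "\<phi> \<in> Hom X Y"
  shows "\<phi> \<in> S"
proof -
  obtain i where i: "(i, \<phi>) \<in> Conf" using iso_is_deflation[OF assms] .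
  then show ?thesis using S_A_deflation zero_object_in_A kernel_of_iso_is_zero assms(1) by blast
qed

lemma Id_in_S: "X \<in> Obj E \<Longrightarrow> Id E X \<in> S"
  using iso_in_S[OF iso_Id id_in_hom] by blast

lemma A_deflation_pullback:
  assumes "(k, s) \<in> Conf" "Dom E k \<in> A" "s \<in> Hom V Y" "g \<in> Hom X Y"
  obtains s' P g' where "s' \<in> S" "s' \<in> Hom P X" "g' \<in> Hom P V" "s \<cdot> g' = g \<cdot> s'"
    "\<And>T r h. r \<in> Hom T V \<Longrightarrow> h \<in> Hom T X \<Longrightarrow> s \<cdot> r = g \<cdot> h \<Longrightarrow> \<exists>c\<in>Hom T P. g' \<cdot> c = r \<and> s' \<cdot> c = h"
proof -
  have "g \<in> Arr E" "Cod E g = Cod E s" using assms(3,4) unfolding hom_def by auto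
  then obtain s' g' i' where pb: "is_pullback E s g g' s'" and is': "(i', s') \<in> Conf"
    using deflation_pullback[OF assms(1)] by blast
  define P where "P = Dom E g'"
  have g': "g' \<in> Hom P V" and s': "s' \<in> Hom P X" and sq: "s \<cdot> g' = g \<cdot> s'"
    using pb assms(3,4) unfolding is_pullback_def hom_def P_def by (elim conjE; simp)+
  obtain \<gamma> where "\<gamma> \<in> Hom (Dom E k) (Dom E i')" "is_iso E \<gamma>" using pullback_kernel_iso[OF assms(1) pb is'] .
  then have "s' \<in> S" using S_A_deflation[OF is'] iso_preserves_A assms(2) by blast
  moreover have "\<exists>c\<in>Hom T P. g' \<cdot> c = r \<and> s' \<cdot> c = h"
    if "r \<in> Hom T V" "h \<in> Hom T X" "s \<cdot> r = g \<cdot> h" for T r h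
    using pullback_univ[OF pb assms(3,4) g' s' that] by blast
  ultimately show ?thesis using that s' g' sq by blast
qed

lemma S_right_ore:
  assumes "s \<in> S" "g \<in> Hom X (Cod E s)"
  shows "\<exists>W v h. v \<in> S \<and> v \<in> Hom W X \<and> h \<in> Hom W (Dom E s) \<and> s \<cdot> h = g \<cdot> v"
  using assms
proof (induction arbitrary: X g rule: S_A.induct)
  case (inf s)
  then obtain q where sq: "(s, q) \<in> Conf" "Cod E q \<in> A" unfolding A_inflation_def by blast
  define K Y A0 where "K = Dom E s" and "Y = Cod E s" and "A0 = Cod E q"
  have s: "s \<in> Hom K Y" and q: "q \<in> Hom Y A0"
    using conflation_homs[OF sq(1)] unfolding K_def Y_def A0_def by auto
  have g: "g \<in> Hom X Y" using inf.prems unfolding Y_def .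
  obtain W A1 i p m where i: "i \<in> Hom W X" "i \<in> S" "(q \<cdot> g) \<cdot> i = Z W A0"
    using strong_P2E[OF comp_in_hom[OF g q] sq(2)[folded A0_def]] by blast
  then have "q \<cdot> (g \<cdot> i) = Z W A0" using comp_assoc[OF i(1) g q] by simp
  then obtain h where "h \<in> Hom W K" "s \<cdot> h = g \<cdot> i"
    using kernel_lift[OF sq(1) s q comp_in_hom[OF i(1) g]] by blast
  then show ?case using i unfolding K_def by blast
next
  case (defl s)
  then obtain k where ks: "(k, s) \<in> Conf" "Dom E k \<in> A" unfolding A_deflation_def by blast
  have "s \<in> Hom (Dom E s) (Cod E s)" using S_in_hom S_A_deflation[OF ks] by blast
  then show ?case using A_deflation_pullback[OF ks _ defl.prems] by metis
next
  case (comp s t)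
  have s: "s \<in> Hom (Dom E s) (Dom E t)" and t: "t \<in> Hom (Dom E t) (Cod E t)"
    using S_in_hom[OF comp.hyps(1)] S_in_hom[OF comp.hyps(2)] comp.hyps(3) by simp_all
  have ts: "Dom E (t \<cdot> s) = Dom E s" "Cod E (t \<cdot> s) = Cod E t"
    using comp_in_hom[OF s t] unfolding hom_def by auto
  obtain W2 v2 h2 where 2: "v2 \<in> S" "v2 \<in> Hom W2 X" "h2 \<in> Hom W2 (Dom E t)" "t \<cdot> h2 = g \<cdot> v2"
    using comp.IH(2) comp.prems ts by force
  obtain W1 v1 h1 where 1: "v1 \<in> S" "v1 \<in> Hom W1 W2" "h1 \<in> Hom W1 (Dom E s)" "s \<cdot> h1 = h2 \<cdot> v1"
    using comp.IH(1)[of h2] 2(3) comp.hyps(3) by force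
  have "(t \<cdot> s) \<cdot> h1 = g \<cdot> (v2 \<cdot> v1)"
    using comp_assoc[OF 1(3) s t] 1(4) comp_assoc[OF 1(2) 2(3) t] 2(4) comp_assoc[OF 1(2) 2(2) comp.prems[unfolded ts]]
    by simp
  then show ?case using S_comp[OF 1(1) 2(1) 1(2) 2(2)] comp_in_hom[OF 1(2) 2(2)] 1(3) ts by metis
qed

lemma S_right_cancel:
  assumes "s \<in> S" "a \<in> Hom T (Dom E s)" "b \<in> Hom T (Dom E s)" "s \<cdot> a = s \<cdot> b"
  shows "\<exists>W r. r \<in> S \<and> r \<in> Hom W T \<and> a \<cdot> r = b \<cdot> r"
  using assms
proof (induction arbitrary: T a b rule: S_A.induct)
  case (inf s)
  then obtain q where "(s, q) \<in> Conf" unfolding A_inflation_def by blast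
  then have "a = b" using kernel_cancel conflation_homs(1) inf.prems by blast
  then show ?case using Id_in_S id_in_hom hom_objs[OF inf.prems(1)] comp_id_right[OF inf.prems(1)] by metis
next
  case (defl s)
  then obtain k where ks: "(k, s) \<in> Conf" "Dom E k \<in> A" unfolding A_deflation_def by blast
  define K Y Q where "K = Dom E k" and "Y = Dom E s" and "Q = Cod E s"
  have k: "k \<in> Hom K Y" and s: "s \<in> Hom Y Q"
    using conflation_homs[OF ks(1)] unfolding K_def Y_def Q_def hom_def by auto
  have a: "a \<in> Hom T Y" and b: "b \<in> Hom T Y" using defl.prems unfolding Y_def by auto
  have "s \<cdot> (a \<ominus> b) = Z T Q"
    using comp_diff[OF a b s] defl.prems(3) diff_eq_zero_iff comp_in_hom[OF b s] by simp
  then obtain c where c: "c \<in> Hom T K" "k \<cdot> c = a \<ominus> b"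
    using kernel_lift[OF ks(1) k s diff_in_hom[OF a b]] by blast
  obtain W A1 i p m where i: "i \<in> Hom W T" "i \<in> S" "c \<cdot> i = Z W K"
    using strong_P2E[OF c(1) ks(2)[folded K_def]] by blast
  have "(a \<ominus> b) \<cdot> i = Z W Y"
    using c(2) comp_assoc[OF i(1) c(1) k] i(3) comp_zero[OF k] hom_objs[OF i(1)] by simp
  then have "a \<cdot> i = b \<cdot> i"
    using diff_comp[OF i(1) a b] diff_eq_zero_iff comp_in_hom[OF i(1) a] comp_in_hom[OF i(1) b] by simp
  then show ?case using i by blast
next
  case (comp s t)
  have s: "s \<in> Hom (Dom E s) (Dom E t)" and t: "t \<in> Hom (Dom E t) (Cod E t)"
    using S_in_hom[OF comp.hyps(1)] S_in_hom[OF comp.hyps(2)] comp.hyps(3) by simp_all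
  have ts: "Dom E (t \<cdot> s) = Dom E s" using comp_in_hom[OF s t] unfolding hom_def by auto
  have a: "a \<in> Hom T (Dom E s)" and b: "b \<in> Hom T (Dom E s)" using comp.prems ts by auto
  have "t \<cdot> (s \<cdot> a) = t \<cdot> (s \<cdot> b)" using comp.prems(3) comp_assoc[OF a s t] comp_assoc[OF b s t] by simp
  then obtain W2 r2 where 2: "r2 \<in> S" "r2 \<in> Hom W2 T" "(s \<cdot> a) \<cdot> r2 = (s \<cdot> b) \<cdot> r2"
    using comp.IH(2) comp_in_hom[OF a s] comp_in_hom[OF b s] by blast
  then have "s \<cdot> (a \<cdot> r2) = s \<cdot> (b \<cdot> r2)" using comp_assoc[OF 2(2) a s] comp_assoc[OF 2(2) b s] by simp
  then obtain W1 r1 where 1: "r1 \<in> S" "r1 \<in> Hom W1 W2" "(a \<cdot> r2) \<cdot> r1 = (b \<cdot> r2) \<cdot> r1"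
    using comp.IH(1) comp_in_hom[OF 2(2) a] comp_in_hom[OF 2(2) b] by blast
  then have "a \<cdot> (r2 \<cdot> r1) = b \<cdot> (r2 \<cdot> r1)" using comp_assoc[OF 1(2) 2(2) a] comp_assoc[OF 1(2) 2(2) b] by simp
  then show ?case using S_comp[OF 1(1) 2(1) 1(2) 2(2)] comp_in_hom[OF 1(2) 2(2)] by blast
qed

lemma A_inflation_refine_square:
  assumes tq: "(t, q) \<in> Conf" "Cod E q \<in> A" and f: "f \<in> Hom X (Cod E t)" and h: "h \<in> Hom W0 X"
    and r: "r \<in> Hom W0 (Dom E t)" and sq: "f \<cdot> h = t \<cdot> r"
  shows "\<exists>K s f' c. s \<in> S \<and> s \<in> Hom K X \<and> f' \<in> Hom K (Dom E t) \<and> c \<in> Hom W0 K \<and>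
    f \<cdot> s = t \<cdot> f' \<and> f' \<cdot> c = r"
proof -
  define V Y A0 where "V = Dom E t" and "Y = Cod E t" and "A0 = Cod E q"
  have t: "t \<in> Hom V Y" and q: "q \<in> Hom Y A0" and qt: "q \<cdot> t = Z V A0"
    using conflation_homs[OF tq(1)] unfolding V_def Y_def A0_def by auto
  have f: "f \<in> Hom X Y" and r: "r \<in> Hom W0 V" using f r unfolding V_def Y_def by auto
  obtain K A1 i d m where id: "(i, d) \<in> Conf" "i \<in> Hom K X" "d \<in> Hom X A1" "m \<in> Hom A1 A0"
    "m \<cdot> d = q \<cdot> f" "is_mono E m" "i \<in> S" "(q \<cdot> f) \<cdot> i = Z K A0"
    by (rule strong_P2E[OF comp_in_hom[OF f q] tq(2)[folded A0_def]])
  have "q \<cdot> (f \<cdot> i) = Z K A0" using id(8) comp_assoc[OF id(2) f q] by simp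
  then obtain f' where f': "f' \<in> Hom K V" "t \<cdot> f' = f \<cdot> i"
    using kernel_lift[OF tq(1) t q comp_in_hom[OF id(2) f]] by blast
  have "(m \<cdot> d) \<cdot> h = Z W0 A0"
    using id(5) comp_assoc[OF h f q, symmetric] sq comp_assoc[OF r t q] qt zero_comp[OF r] hom_objs[OF q]
    by simp
  then obtain c where c: "c \<in> Hom W0 K" "i \<cdot> c = h" by (rule kernel_lift_through_mono[OF id(1-4,6) h])
  have "t \<cdot> (f' \<cdot> c) = t \<cdot> r"
    using comp_assoc[OF c(1) f'(1) t] f'(2) comp_assoc[OF c(1) id(2) f, symmetric] c(2) sq by simp
  then have "f' \<cdot> c = r" using kernel_cancel[OF tq(1) t comp_in_hom[OF c(1) f'(1)] r] by blast
  then show ?thesis using id(2,7) f' c unfolding V_def by metis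
qed

lemma S_refine_square:
  assumes "t \<in> S" "f \<in> Hom X (Cod E t)" "h \<in> Hom W0 X" "r \<in> Hom W0 (Dom E t)" "f \<cdot> h = t \<cdot> r"
  shows "\<exists>K s f' c. s \<in> S \<and> s \<in> Hom K X \<and> f' \<in> Hom K (Dom E t) \<and> c \<in> Hom W0 K \<and>
    f \<cdot> s = t \<cdot> f' \<and> f' \<cdot> c = r"
  using assms
proof (induction arbitrary: X f h r rule: S_A.induct)
  case (inf t)
  then show ?case using A_inflation_refine_square unfolding A_inflation_def by blast
next
  case (defl t)
  then obtain k where kt: "(k, t) \<in> Conf" "Dom E k \<in> A" unfolding A_deflation_def by blast
  have t: "t \<in> Hom (Dom E t) (Cod E t)" using S_in_hom S_A_deflation[OF kt] by blast
  obtain s P f' where "s \<in> S" "s \<in> Hom P X" "f' \<in> Hom P (Dom E t)" "t \<cdot> f' = f \<cdot> s"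
    "\<And>T r h. r \<in> Hom T (Dom E t) \<Longrightarrow> h \<in> Hom T X \<Longrightarrow> t \<cdot> r = f \<cdot> h \<Longrightarrow>
       \<exists>c\<in>Hom T P. f' \<cdot> c = r \<and> s \<cdot> c = h"
    by (rule A_deflation_pullback[OF kt t defl.prems(1)]) blast
  then show ?case using defl.prems(2-4) by metis
next
  case (comp s t)
  have s: "s \<in> Hom (Dom E s) (Dom E t)" and t: "t \<in> Hom (Dom E t) (Cod E t)"
    using S_in_hom[OF comp.hyps(1)] S_in_hom[OF comp.hyps(2)] comp.hyps(3) by simp_all
  have ts: "Dom E (t \<cdot> s) = Dom E s" "Cod E (t \<cdot> s) = Cod E t"
    using comp_in_hom[OF s t] unfolding hom_def by auto
  have f: "f \<in> Hom X (Cod E t)" and r: "r \<in> Hom W0 (Dom E s)" using comp.prems ts by auto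
  have "f \<cdot> h = t \<cdot> (s \<cdot> r)" using comp.prems(4) comp_assoc[OF r s t] by simp
  then obtain K2 s2 f2 c2 where 2: "s2 \<in> S" "s2 \<in> Hom K2 X" "f2 \<in> Hom K2 (Dom E t)" "c2 \<in> Hom W0 K2"
    "f \<cdot> s2 = t \<cdot> f2" "f2 \<cdot> c2 = s \<cdot> r"
    using comp.IH(2)[OF f comp.prems(2) comp_in_hom[OF r s]] by blast
  then obtain K1 s1 f1 c1 where 1: "s1 \<in> S" "s1 \<in> Hom K1 K2" "f1 \<in> Hom K1 (Dom E s)" "c1 \<in> Hom W0 K1"
    "f2 \<cdot> s1 = s \<cdot> f1" "f1 \<cdot> c1 = r"
    using comp.IH(1)[of f2 K2 c2 r] comp.hyps(3) r by auto
  have "f \<cdot> (s2 \<cdot> s1) = (t \<cdot> s) \<cdot> f1"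
    using comp_assoc[OF 1(2) 2(2) f] 2(5) comp_assoc[OF 1(2) 2(3) t, symmetric] 1(5) comp_assoc[OF 1(3) s t]
    by simp
  then show ?case using S_comp[OF 1(1) 2(1) 1(2) 2(2)] comp_in_hom[OF 1(2) 2(2)] 1(3,4,6) ts by metis
qed

lemma P3E:
  assumes "(u, q) \<in> Conf" "(k, d) \<in> Conf" "Dom E u = Dom E d" "Cod E d \<in> A"
  obtains i' p' c' where "is_pushout E d u i' p'" "(i', c') \<in> Conf"
proof -
  have "\<forall>i p. inflation Conf i \<longrightarrow> deflation Conf p \<longrightarrow> Dom E i = Dom E p \<longrightarrow> Cod E p \<in> A \<longrightarrow>
      (\<exists>i' p'. is_pushout E p i i' p' \<and> inflation Conf i' \<and> deflation Conf p')"
    using percolating unfolding strongly_right_percolating_def right_percolating_def by (elim conjE)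
  then show ?thesis using assms that unfolding inflation_def deflation_def by blast
qed

lemma P4E:
  assumes "(k, u) \<in> Conf" "(i, d) \<in> Conf" "k \<in> Hom K V" "d \<in> Hom V A1" "K \<in> A" "A1 \<in> A"
  obtains k1 d1 A2 d2 B2 j cj m' where "(k1, d1) \<in> Conf" "d1 \<in> Hom K A2" "d2 \<in> Hom V B2" "B2 \<in> A"
    "(j, cj) \<in> Conf" "j \<in> Hom A2 B2" "m' \<in> Hom B2 A1" "d2 \<cdot> k = j \<cdot> d1" "d = m' \<cdot> d2"
proof -
  have "\<forall>i p. inflation Conf i \<longrightarrow> deflation Conf p \<longrightarrow> Cod E i = Dom E p \<longrightarrow> Dom E i \<in> A \<longrightarrow> Cod E p \<in> A \<longrightarrow>
      (\<exists>d1 d2 j m. deflation Conf d1 \<and> deflation Conf d2 \<and> inflation Conf j \<and> m \<in> Arr E \<and>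
        Dom E d1 = Dom E i \<and> Cod E d1 \<in> A \<and> Dom E d2 = Cod E i \<and> Cod E d2 \<in> A \<and>
        Dom E j = Cod E d1 \<and> Cod E j = Cod E d2 \<and> Dom E m = Cod E d2 \<and> Cod E m = Cod E p \<and>
        d2 \<cdot> i = j \<cdot> d1 \<and> p = m \<cdot> d2)"
    using percolating unfolding strongly_right_percolating_def right_percolating_def by (elim conjE)
  moreover have "inflation Conf k" "deflation Conf d" "Cod E k = Dom E d" "Dom E k \<in> A" "Cod E d \<in> A"
    using assms unfolding inflation_def deflation_def hom_def by auto
  ultimately obtain d1 d2 j m' where P: "deflation Conf d1" "deflation Conf d2" "inflation Conf j" "m' \<in> Arr E"
    "Dom E d1 = Dom E k" "Dom E d2 = Cod E k" "Cod E d2 \<in> A"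
    "Dom E j = Cod E d1" "Cod E j = Cod E d2" "Dom E m' = Cod E d2" "Cod E m' = Cod E d"
    "d2 \<cdot> k = j \<cdot> d1" "d = m' \<cdot> d2"
    by blast
  obtain k1 k2 cj where kd1: "(k1, d1) \<in> Conf" and "(k2, d2) \<in> Conf" and jc: "(j, cj) \<in> Conf"
    using P(1-3) unfolding inflation_def deflation_def by blast
  moreover have "d1 \<in> Hom K (Cod E d1)" "d2 \<in> Hom V (Cod E d2)" "j \<in> Hom (Cod E d1) (Cod E d2)"
    "m' \<in> Hom (Cod E d2) A1"
    using conflation_homs(2)[OF kd1] conflation_homs(2)[OF \<open>(k2, d2) \<in> Conf\<close>] conflation_homs(1)[OF jc]
      P(4-11) assms(3,4) unfolding hom_def by auto
  ultimately show ?thesis using that P(7,12,13) by blast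
qed

definition factors_through_A :: "'m \<Rightarrow> 'o \<Rightarrow> 'o \<Rightarrow> bool" where
  "factors_through_A \<phi> X T \<longleftrightarrow> (\<exists>A0\<in>A. \<exists>b\<in>Hom X A0. \<exists>a\<in>Hom A0 T. \<phi> = a \<cdot> b)"

(* Push the inflation out along the A-part of the factorization of \<phi> u (P3); the pushout lies
   in A by P1, because its cokernel is isomorphic to that of u. *)
lemma factors_through_A_cancel_A_inflation:
  assumes uq: "(u, q) \<in> Conf" "Cod E q \<in> A" and \<phi>: "\<phi> \<in> Hom (Cod E u) T"
    and "factors_through_A (\<phi> \<cdot> u) (Dom E u) T"
  shows "factors_through_A \<phi> (Cod E u) T"
proof -
  define V K where "V = Dom E u" and "K = Cod E u"
  have u: "u \<in> Hom V K" using conflation_homs(1)[OF uq(1)] unfolding V_def K_def .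
  obtain A' a b where ab: "b \<in> Hom V A'" "a \<in> Hom A' T" "\<phi> \<cdot> u = a \<cdot> b" "A' \<in> A"
    using assms(4) unfolding factors_through_A_def V_def by blast
  obtain W A1 i d m where id: "(i, d) \<in> Conf" "d \<in> Hom V A1" "A1 \<in> A" "m \<in> Hom A1 A'" "m \<cdot> d = b"
    by (rule strong_P2E[OF ab(1,4)])
  have "Dom E u = Dom E d" "Cod E d \<in> A" using id(2,3) u unfolding hom_def by auto
  then obtain i' p' c' where po: "is_pushout E d u i' p'" and ic: "(i', c') \<in> Conf"
    by (rule P3E[OF uq(1) id(1)])
  define P where "P = Cod E i'"
  have i': "i' \<in> Hom A1 P" and p': "p' \<in> Hom K P"
    using po id(2) u unfolding is_pushout_def hom_def P_def by (elim conjE; simp)+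
  have "(a \<cdot> m) \<cdot> d = \<phi> \<cdot> u" using comp_assoc[OF id(2,4) ab(2)] id(5) ab(3) by simp
  then obtain \<alpha> where \<alpha>: "\<alpha> \<in> Hom P T" "\<alpha> \<cdot> p' = \<phi>"
    using pushout_univ[OF po id(2) u i' p' comp_in_hom[OF id(4) ab(2)] \<phi>[folded K_def]] by blast
  obtain \<zeta> where "\<zeta> \<in> Hom (Cod E q) (Cod E c')" "is_iso E \<zeta>" using pushout_cokernel_iso[OF uq(1) po ic] .
  then have "Cod E c' \<in> A" using iso_preserves_A uq(2) by blast
  moreover have "Dom E i' = A1" using i' unfolding hom_def by simp
  ultimately have "P \<in> A" using conflation_A_iff[OF ic] id(3) unfolding P_def by simp
  then show ?thesis using \<alpha> p' unfolding factors_through_A_def K_def by metis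
qed

lemma factors_through_A_cancel_A_deflation:
  assumes ku: "(k, u) \<in> Conf" "Dom E k \<in> A" and \<phi>: "\<phi> \<in> Hom (Cod E u) T"
    and "factors_through_A (\<phi> \<cdot> u) (Dom E u) T"
  shows "factors_through_A \<phi> (Cod E u) T"
proof -
  define K0 V K where "K0 = Dom E k" and "V = Dom E u" and "K = Cod E u"
  have k: "k \<in> Hom K0 V" and u: "u \<in> Hom V K" and uk: "u \<cdot> k = Z K0 K"
    using conflation_homs[OF ku(1)] unfolding K0_def V_def K_def hom_def by auto
  obtain A' a b where ab: "b \<in> Hom V A'" "a \<in> Hom A' T" "\<phi> \<cdot> u = a \<cdot> b" "A' \<in> A"
    using assms(4) unfolding factors_through_A_def V_def by blast
  obtain W A1 i d m where id: "(i, d) \<in> Conf" "d \<in> Hom V A1" "A1 \<in> A" "m \<in> Hom A1 A'" "m \<cdot> d = b"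
    by (rule strong_P2E[OF ab(1,4)])
  obtain k1 d1 A2 d2 B2 j cj m' where P: "(k1, d1) \<in> Conf" "d1 \<in> Hom K0 A2" "d2 \<in> Hom V B2" "B2 \<in> A"
    "(j, cj) \<in> Conf" "j \<in> Hom A2 B2" "m' \<in> Hom B2 A1" "d2 \<cdot> k = j \<cdot> d1" "d = m' \<cdot> d2"
    by (rule P4E[OF ku(1) id(1) k id(2) ku(2)[folded K0_def] id(3)])
  define C where "C = Cod E cj"
  have cj: "cj \<in> Hom B2 C" and cjj: "cj \<cdot> j = Z A2 C"
    using conflation_homs[OF P(5)] P(6) unfolding C_def hom_def by auto
  have CA: "C \<in> A" using conflation_A_iff[OF P(5)] P(4,6) unfolding C_def hom_def by auto
  have O: "K0 \<in> Obj E" "A2 \<in> Obj E" "C \<in> Obj E" "T \<in> Obj E" using hom_objs P(2) cj ab(2) by blast+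
  define g where "g = a \<cdot> m \<cdot> m'"
  have g: "g \<in> Hom B2 T" unfolding g_def using comp_in_hom P(7) id(4) ab(2) by blast
  have gd2: "g \<cdot> d2 = \<phi> \<cdot> u"
    using comp_assoc[OF P(3) comp_in_hom[OF P(7) id(4)] ab(2), symmetric] comp_assoc[OF P(3,7) id(4), symmetric]
      P(9) id(5) ab(3) unfolding g_def by simp
  have "(g \<cdot> j) \<cdot> d1 = Z A2 T \<cdot> d1"
    using comp_assoc[OF P(2,6) g, symmetric] P(8)[symmetric] comp_assoc[OF k P(3) g] gd2
      comp_assoc[OF k u \<phi>[folded K_def], symmetric] uk comp_zero[OF \<phi>[folded K_def] O(1)] zero_comp[OF P(2) O(4)]
    by simp
  then have "g \<cdot> j = Z A2 T" by (rule cokernel_cancel[OF P(1,2) comp_in_hom[OF P(6) g] zero_in_hom[OF O(2,4)]])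
  then obtain \<psi>' where \<psi>': "\<psi>' \<in> Hom C T" "\<psi>' \<cdot> cj = g" using cokernel_desc[OF P(5,6) cj g] by blast
  have "(cj \<cdot> d2) \<cdot> k = Z K0 C"
    using comp_assoc[OF k P(3) cj, symmetric] P(8) comp_assoc[OF P(2,6) cj] cjj zero_comp[OF P(2) O(3)] by simp
  then obtain \<psi> where \<psi>: "\<psi> \<in> Hom K C" "\<psi> \<cdot> u = cj \<cdot> d2"
    using cokernel_desc[OF ku(1) k u comp_in_hom[OF P(3) cj]] by blast
  have "(\<psi>' \<cdot> \<psi>) \<cdot> u = \<phi> \<cdot> u"
    using comp_assoc[OF u \<psi>(1) \<psi>'(1), symmetric] \<psi>(2) comp_assoc[OF P(3) cj \<psi>'(1)] \<psi>'(2) gd2 by simp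
  then have "\<psi>' \<cdot> \<psi> = \<phi>" by (rule cokernel_cancel[OF ku(1) u comp_in_hom[OF \<psi>(1) \<psi>'(1)] \<phi>[folded K_def]])
  then show ?thesis using CA \<psi>(1) \<psi>'(1) unfolding factors_through_A_def K_def by metis
qed

lemma factors_through_A_cancel_S:
  assumes "u \<in> S" "\<phi> \<in> Hom (Cod E u) T" "factors_through_A (\<phi> \<cdot> u) (Dom E u) T"
  shows "factors_through_A \<phi> (Cod E u) T"
  using assms
proof (induction arbitrary: \<phi> rule: S_A.induct)
  case (inf u)
  then show ?case using factors_through_A_cancel_A_inflation unfolding A_inflation_def by blast
next
  case (defl u)
  then show ?case using factors_through_A_cancel_A_deflation unfolding A_deflation_def by blast
next
  case (comp s t)
  have s: "s \<in> Hom (Dom E s) (Dom E t)" and t: "t \<in> Hom (Dom E t) (Cod E t)"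
    using S_in_hom[OF comp.hyps(1)] S_in_hom[OF comp.hyps(2)] comp.hyps(3) by simp_all
  have ts: "Dom E (t \<cdot> s) = Dom E s" "Cod E (t \<cdot> s) = Cod E t"
    using comp_in_hom[OF s t] unfolding hom_def by auto
  have \<phi>: "\<phi> \<in> Hom (Cod E t) T" using comp.prems(1) ts by simp
  have "factors_through_A ((\<phi> \<cdot> t) \<cdot> s) (Dom E s) T"
    using comp.prems(2) ts comp_assoc[OF s t \<phi>] by simp
  then have "factors_through_A (\<phi> \<cdot> t) (Dom E t) T"
    using comp.IH(1) comp_in_hom[OF t \<phi>] comp.hyps(3) by simp
  then show ?case using comp.IH(2)[OF \<phi>] ts by simp
qed

lemma factors_through_A_if_vanishes_on_S:
  assumes "u \<in> S" "\<phi> \<in> Hom (Cod E u) T" "\<phi> \<cdot> u = Z (Dom E u) T"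
  shows "factors_through_A \<phi> (Cod E u) T"
proof -
  obtain a where a: "a \<in> A" "a \<in> Obj E" using A_nonempty A_subset by blast
  have O: "Dom E u \<in> Obj E" "T \<in> Obj E" using hom_objs assms(2) S_in_hom[OF assms(1)] by blast+
  have "Z (Dom E u) T = Z a T \<cdot> Z (Dom E u) a" using zero_comp[OF zero_in_hom[OF O(1) a(2)] O(2)] by simp
  then have "factors_through_A (\<phi> \<cdot> u) (Dom E u) T"
    using assms(3) a zero_in_hom O unfolding factors_through_A_def by metis
  then show ?thesis using factors_through_A_cancel_S assms(1,2) by blast
qed

(* With 1 - c e = a b, the kernels of the A-parts of b and of b c (strong P2) are identified by
   e and c, so e maps the first, which lies in S, to a morphism of S. *)
lemma split_epi_in_S_if_complement_factors_through_A:
  assumes e: "e \<in> Hom K W" and c: "c \<in> Hom W K" and ec: "e \<cdot> c = Id E W"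
    and "factors_through_A (Id E K \<ominus> c \<cdot> e) K K"
  shows "\<exists>V u. u \<in> S \<and> u \<in> Hom V K \<and> e \<cdot> u \<in> S"
proof -
  obtain A0 a b where b: "b \<in> Hom K A0" "A0 \<in> A" and a: "a \<in> Hom A0 K" and ab: "Id E K \<ominus> c \<cdot> e = a \<cdot> b"
    using assms(4) unfolding factors_through_A_def by blast
  obtain V A1 i d m where id: "(i, d) \<in> Conf" "i \<in> Hom V K" "d \<in> Hom K A1" "m \<in> Hom A1 A0"
    "m \<cdot> d = b" "is_mono E m" "i \<in> S" "b \<cdot> i = Z V A0"
    by (rule strong_P2E[OF b])
  have cei: "c \<cdot> (e \<cdot> i) = i" using comp_eq_self_if_complement_vanishes[OF e c a b(1) ab id(2,8)] .
  obtain K3 A3 k3 d3 m3 where id3: "(k3, d3) \<in> Conf" "k3 \<in> Hom K3 W" "d3 \<in> Hom W A3" "m3 \<in> Hom A3 A0"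
    "m3 \<cdot> d3 = b \<cdot> c" "is_mono E m3" "k3 \<in> S" "(b \<cdot> c) \<cdot> k3 = Z K3 A0"
    by (rule strong_P2E[OF comp_in_hom[OF c b(1)] b(2)])
  have ei: "e \<cdot> i \<in> Hom V W" and ck3: "c \<cdot> k3 \<in> Hom K3 K" using comp_in_hom id(2) e id3(2) c by blast+
  have O: "V \<in> Obj E" "K3 \<in> Obj E" using hom_objs id(2) id3(2) by blast+
  have "(m3 \<cdot> d3) \<cdot> (e \<cdot> i) = Z V A0" using id3(5) comp_assoc[OF ei c b(1), symmetric] cei id(8) by simp
  then obtain \<iota> where \<iota>: "\<iota> \<in> Hom V K3" "k3 \<cdot> \<iota> = e \<cdot> i" by (rule kernel_lift_through_mono[OF id3(1-4,6) ei])
  have "(m \<cdot> d) \<cdot> (c \<cdot> k3) = Z K3 A0" using id(5) comp_assoc[OF id3(2) c b(1)] id3(8) by simp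
  then obtain \<kappa> where \<kappa>: "\<kappa> \<in> Hom K3 V" "i \<cdot> \<kappa> = c \<cdot> k3" by (rule kernel_lift_through_mono[OF id(1-4,6) ck3])
  have "k3 \<cdot> (\<iota> \<cdot> \<kappa>) = k3 \<cdot> Id E K3"
    using comp_assoc[OF \<kappa>(1) \<iota>(1) id3(2)] \<iota>(2) comp_assoc[OF \<kappa>(1) id(2) e, symmetric] \<kappa>(2)
      comp_assoc[OF id3(2) c e] ec id3(2) by simp
  then have \<iota>\<kappa>: "\<iota> \<cdot> \<kappa> = Id E K3"
    using kernel_cancel[OF id3(1,2) comp_in_hom[OF \<kappa>(1) \<iota>(1)] id_in_hom[OF O(2)]] by blast
  have "i \<cdot> (\<kappa> \<cdot> \<iota>) = i \<cdot> Id E V"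
    using comp_assoc[OF \<iota>(1) \<kappa>(1) id(2)] \<kappa>(2) comp_assoc[OF \<iota>(1) id3(2) c, symmetric] \<iota>(2) cei id(2) by simp
  then have "\<kappa> \<cdot> \<iota> = Id E V"
    using kernel_cancel[OF id(1,2) comp_in_hom[OF \<iota>(1) \<kappa>(1)] id_in_hom[OF O(1)]] by blast
  then have "\<iota> \<in> S" using iso_in_S[OF is_isoI[OF \<iota>(1) \<kappa>(1) _ \<iota>\<kappa>] \<iota>(1)] by blast
  then have "e \<cdot> i \<in> S" using S_comp[OF _ id3(7) \<iota>(1) id3(2)] \<iota>(2) by simp
  then show ?thesis using id(2,7) by blast
qed

end

section \<open>Roofs and the functors they define\<close>

context percolating_cat
begin

text \<open>A roof \<open>(t, g) \<in> roofs Y X\<close> stands for the right fraction \<open>g t\<inverse> : Y \<rightarrow> X\<close>.\<close>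

definition roofs :: "'o \<Rightarrow> 'o \<Rightarrow> ('m \<times> 'm) set" where
  "roofs Y X = {(t, g). t \<in> S \<and> Cod E t = Y \<and> g \<in> Hom (Dom E t) X}"

definition roof_equiv :: "'o \<Rightarrow> 'm \<times> 'm \<Rightarrow> 'm \<times> 'm \<Rightarrow> bool" where
  "roof_equiv Y p q \<longleftrightarrow> (\<exists>X. p \<in> roofs Y X \<and> q \<in> roofs Y X) \<and>
    (\<exists>W u1 u2. u1 \<in> Hom W (Dom E (fst p)) \<and> u2 \<in> Hom W (Dom E (fst q)) \<and>
       fst p \<cdot> u1 = fst q \<cdot> u2 \<and> fst p \<cdot> u1 \<in> S \<and> snd p \<cdot> u1 = snd q \<cdot> u2)"

lemma roofs_iff: "(t, g) \<in> roofs Y X \<longleftrightarrow> t \<in> S \<and> Cod E t = Y \<and> g \<in> Hom (Dom E t) X"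
  unfolding roofs_def by simp

lemma roofs_S_hom: "(t, g) \<in> roofs Y X \<Longrightarrow> t \<in> Hom (Dom E t) Y"
  unfolding roofs_def using S_in_hom by auto

lemma roofs_unique: "p \<in> roofs Y X \<Longrightarrow> p \<in> roofs Y X' \<Longrightarrow> X' = X"
  unfolding roofs_def hom_def by auto

lemma roofs_postcomp: "(t, g) \<in> roofs Y X \<Longrightarrow> h \<in> Hom X X' \<Longrightarrow> (t, h \<cdot> g) \<in> roofs Y X'"
  unfolding roofs_iff using comp_in_hom by blast

lemma roof_equivI:
  assumes "(t1, g1) \<in> roofs Y X" "(t2, g2) \<in> roofs Y X" "u1 \<in> Hom W (Dom E t1)" "u2 \<in> Hom W (Dom E t2)"
    "t1 \<cdot> u1 = t2 \<cdot> u2" "t1 \<cdot> u1 \<in> S" "g1 \<cdot> u1 = g2 \<cdot> u2"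
  shows "roof_equiv Y (t1, g1) (t2, g2)"
  unfolding roof_equiv_def fst_conv snd_conv using assms by blast

lemma roof_equivE:
  assumes "roof_equiv Y (t1, g1) (t2, g2)"
  obtains X W u1 u2 where "(t1, g1) \<in> roofs Y X" "(t2, g2) \<in> roofs Y X"
    "u1 \<in> Hom W (Dom E t1)" "u2 \<in> Hom W (Dom E t2)" "t1 \<cdot> u1 = t2 \<cdot> u2" "t1 \<cdot> u1 \<in> S" "g1 \<cdot> u1 = g2 \<cdot> u2"
  using assms unfolding roof_equiv_def by auto

lemma roof_equiv_roofs: "roof_equiv Y p q \<Longrightarrow> p \<in> roofs Y X \<Longrightarrow> q \<in> roofs Y X"
  unfolding roof_equiv_def using roofs_unique by blast

lemma roof_equiv_refl:
  assumes "(t, g) \<in> roofs Y X"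
  shows "roof_equiv Y (t, g) (t, g)"
proof -
  have t: "t \<in> S" "t \<in> Hom (Dom E t) Y" using assms roofs_S_hom unfolding roofs_iff by auto
  have O: "Dom E t \<in> Obj E" using hom_objs[OF t(2)] by blast
  show ?thesis using roof_equivI[OF assms assms id_in_hom[OF O] id_in_hom[OF O]] t by simp
qed

lemma roof_equiv_sym: "roof_equiv Y p q \<Longrightarrow> roof_equiv Y q p"
  unfolding roof_equiv_def by (auto) (metis)

lemma roof_equiv_trans:
  assumes "roof_equiv Y (t1, g1) (t2, g2)" "roof_equiv Y (t2, g2) (t3, g3)"
  shows "roof_equiv Y (t1, g1) (t3, g3)"
proof -
  obtain X W u1 u2 where A: "(t1, g1) \<in> roofs Y X" "(t2, g2) \<in> roofs Y X" "u1 \<in> Hom W (Dom E t1)"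
    "u2 \<in> Hom W (Dom E t2)" "t1 \<cdot> u1 = t2 \<cdot> u2" "t1 \<cdot> u1 \<in> S" "g1 \<cdot> u1 = g2 \<cdot> u2"
    by (rule roof_equivE[OF assms(1)])
  obtain W' v2 v3 where B: "(t3, g3) \<in> roofs Y X" "v2 \<in> Hom W' (Dom E t2)" "v3 \<in> Hom W' (Dom E t3)"
    "t2 \<cdot> v2 = t3 \<cdot> v3" "t2 \<cdot> v2 \<in> S" "g2 \<cdot> v2 = g3 \<cdot> v3"
    using roof_equivE[OF assms(2)] roof_equiv_roofs[OF assms(2) A(2)] by metis
  have t1: "t1 \<in> Hom (Dom E t1) Y" and g1: "g1 \<in> Hom (Dom E t1) X"
    and t2: "t2 \<in> Hom (Dom E t2) Y" "t2 \<in> S" and g2: "g2 \<in> Hom (Dom E t2) X"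
    and t3: "t3 \<in> Hom (Dom E t3) Y" and g3: "g3 \<in> Hom (Dom E t3) X"
    using A(1,2) B(1) roofs_S_hom unfolding roofs_iff by blast+
  have "Cod E (t2 \<cdot> v2) = Y" using comp_in_hom[OF B(2) t2(1)] unfolding hom_def by simp
  then obtain W'' w z where C: "w \<in> S" "w \<in> Hom W'' W" "z \<in> Hom W'' W'" "(t2 \<cdot> v2) \<cdot> z = (t2 \<cdot> u2) \<cdot> w"
    using S_right_ore[OF B(5), of "t2 \<cdot> u2" W] comp_in_hom[OF A(4) t2(1)] comp_in_hom[OF B(2) t2(1)]
    unfolding hom_def by auto
  have "t2 \<cdot> (v2 \<cdot> z) = t2 \<cdot> (u2 \<cdot> w)" using C(4) comp_assoc[OF C(3) B(2) t2(1)] comp_assoc[OF C(2) A(4) t2(1)] by simp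
  then obtain W3 r where R: "r \<in> S" "r \<in> Hom W3 W''" "(v2 \<cdot> z) \<cdot> r = (u2 \<cdot> w) \<cdot> r"
    using S_right_cancel[OF t2(2) comp_in_hom[OF C(3) B(2)] comp_in_hom[OF C(2) A(4)]] by blast
  have wr: "w \<cdot> r \<in> Hom W3 W" and zr: "z \<cdot> r \<in> Hom W3 W'" using comp_in_hom C R by blast+
  have key: "u2 \<cdot> (w \<cdot> r) = v2 \<cdot> (z \<cdot> r)" using R(3) comp_assoc[OF R(2) C(2) A(4)] comp_assoc[OF R(2) C(3) B(2)] by simp
  have "t1 \<cdot> (u1 \<cdot> (w \<cdot> r)) = t3 \<cdot> (v3 \<cdot> (z \<cdot> r))"
    using comp_eq_precomp[OF A(3) t1 A(4) t2(1) A(5) wr] key comp_eq_precomp[OF B(2) t2(1) B(3) t3 B(4) zr] by simp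
  moreover have "g1 \<cdot> (u1 \<cdot> (w \<cdot> r)) = g3 \<cdot> (v3 \<cdot> (z \<cdot> r))"
    using comp_eq_precomp[OF A(3) g1 A(4) g2 A(7) wr] key comp_eq_precomp[OF B(2) g2 B(3) g3 B(6) zr] by simp
  moreover have "t1 \<cdot> (u1 \<cdot> (w \<cdot> r)) \<in> S"
    using S_comp[OF S_comp[OF R(1) C(1) R(2) C(2)] A(6) wr comp_in_hom[OF A(3) t1]] comp_assoc[OF wr A(3) t1] by simp
  ultimately show ?thesis using roof_equivI[OF A(1) B(1) comp_in_hom[OF wr A(3)] comp_in_hom[OF zr B(3)]] by blast
qed

lemma roof_equiv_postcomp:
  assumes "roof_equiv Y (t1, g1) (t2, g2)" "(t1, g1) \<in> roofs Y X" "h \<in> Hom X X'"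
  shows "roof_equiv Y (t1, h \<cdot> g1) (t2, h \<cdot> g2)"
proof -
  obtain X0 W u1 u2 where A: "(t1, g1) \<in> roofs Y X0" "(t2, g2) \<in> roofs Y X0" "u1 \<in> Hom W (Dom E t1)"
    "u2 \<in> Hom W (Dom E t2)" "t1 \<cdot> u1 = t2 \<cdot> u2" "t1 \<cdot> u1 \<in> S" "g1 \<cdot> u1 = g2 \<cdot> u2"
    by (rule roof_equivE[OF assms(1)])
  have "X0 = X" using roofs_unique A(1) assms(2) by blast
  then have g: "g1 \<in> Hom (Dom E t1) X" "g2 \<in> Hom (Dom E t2) X" using A(1,2) unfolding roofs_iff by auto
  have "(h \<cdot> g1) \<cdot> u1 = (h \<cdot> g2) \<cdot> u2"
    using A(7) comp_assoc[OF A(3) g(1) assms(3)] comp_assoc[OF A(4) g(2) assms(3)] by simp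
  then show ?thesis
    using roof_equivI[OF roofs_postcomp[OF A(1)] roofs_postcomp[OF A(2)] A(3-6)] assms(3) \<open>X0 = X\<close> by simp
qed

lemma carrier_equiv_roofs: "carrier_equiv (Obj E) (roofs Y) (roof_equiv Y)"
proof
  show "roof_equiv Y p p" if "p \<in> roofs Y X" for X p
    using that roof_equiv_refl by (cases p) blast
  show "roof_equiv Y q p" if "roof_equiv Y p q" for p q using that roof_equiv_sym by blast
  show "roof_equiv Y p r" if "roof_equiv Y p q" "roof_equiv Y q r" for p q r
    using that roof_equiv_trans by (cases p, cases q, cases r) blast
  show "q \<in> roofs Y X" if "roof_equiv Y p q" "p \<in> roofs Y X" for p q X
    using that roof_equiv_roofs by blast
qed

abbreviation roof_cat :: "'o \<Rightarrow> ('o, ('o \<times> 'o \<times> ('m \<times> bool) list) set) category" where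
  "roof_cat Y \<equiv> rel_category (Obj E) (roofs Y) (roof_equiv Y)"

lemmas roof_cat_simps = carrier_equiv.D_simps[OF carrier_equiv_roofs]

definition postcomp_rel :: "'o \<Rightarrow> 'm \<Rightarrow> (('m \<times> 'm) \<times> ('m \<times> 'm)) set" where
  "postcomp_rel Y h = {(p, q). p \<in> roofs Y (Dom E h) \<and> q \<in> roofs Y (Cod E h) \<and> roof_equiv Y (fst p, h \<cdot> snd p) q}"

definition roof_functor :: "'o \<Rightarrow> 'm \<Rightarrow> ('o \<times> 'o \<times> ('m \<times> bool) list) set" where
  "roof_functor Y h = rel_arrow (Dom E h) (Cod E h) (postcomp_rel Y h)"

lemma postcomp_rel_iff:
  assumes "h \<in> Hom X X'"
  shows "((t, g), q) \<in> postcomp_rel Y h \<longleftrightarrow> (t, g) \<in> roofs Y X \<and> q \<in> roofs Y X' \<and> roof_equiv Y (t, h \<cdot> g) q"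
  using assms unfolding postcomp_rel_def hom_def by auto

lemma saturated_postcomp_rel:
  assumes h: "h \<in> Hom X X'"
  shows "saturated_rel (roofs Y) (roof_equiv Y) X X' (postcomp_rel Y h)"
  unfolding saturated_rel_def
proof (intro conjI allI impI)
  show "postcomp_rel Y h \<subseteq> roofs Y X \<times> roofs Y X'" using postcomp_rel_iff[OF h] by auto
  fix p q p' q' assume pq: "(p, q) \<in> postcomp_rel Y h" and e: "roof_equiv Y p' p" "roof_equiv Y q q'"
  obtain t g t' g' a b a' b' where p: "p = (t, g)" and p': "p' = (t', g')" and q: "q = (a, b)"
    and q': "q' = (a', b')" by fastforce
  have tg: "(t, g) \<in> roofs Y X" and eq: "roof_equiv Y (t, h \<cdot> g) (a, b)" and "(a, b) \<in> roofs Y X'"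
    using pq postcomp_rel_iff[OF h] p q by auto
  then have "(a', b') \<in> roofs Y X'" using e(2) roof_equiv_roofs q q' by blast
  moreover have t'g': "(t', g') \<in> roofs Y X" using tg e(1) roof_equiv_roofs roof_equiv_sym p p' by blast
  moreover have "roof_equiv Y (t', h \<cdot> g') (a', b')"
    using roof_equiv_trans[OF roof_equiv_trans[OF roof_equiv_postcomp[OF e(1)[unfolded p p'] t'g' h] eq]]
      e(2)[unfolded q q'] by blast
  ultimately show "(p', q') \<in> postcomp_rel Y h" using postcomp_rel_iff[OF h] p' q' by simp
qed

lemma roof_functor_in_hom: "h \<in> Hom X X' \<Longrightarrow> roof_functor Y h \<in> hom (roof_cat Y) X X'"
  using carrier_equiv.rel_arrow_in_hom[OF carrier_equiv_roofs _ _ saturated_postcomp_rel] hom_objs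
  unfolding roof_functor_def hom_def by auto

lemma postcomp_rel_Id:
  assumes "X \<in> Obj E"
  shows "postcomp_rel Y (Id E X) = equiv_on_carrier (roofs Y) (roof_equiv Y) X"
proof -
  have "Id E X \<cdot> g = g" if "(t, g) \<in> roofs Y X" for t g using that comp_id_left unfolding roofs_iff by blast
  then show ?thesis
    using postcomp_rel_iff[OF id_in_hom[OF assms]] unfolding equiv_on_carrier_def by fastforce
qed

lemma postcomp_rel_comp:
  assumes f: "f \<in> Hom X X'" and g: "g \<in> Hom X' X''"
  shows "postcomp_rel Y (g \<cdot> f) = postcomp_rel Y f O postcomp_rel Y g"
proof (intro set_eqI iffI)
  fix x assume "x \<in> postcomp_rel Y (g \<cdot> f)"
  then obtain t k q where x: "x = ((t, k), q)" "(t, k) \<in> roofs Y X" "q \<in> roofs Y X''"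
    "roof_equiv Y (t, (g \<cdot> f) \<cdot> k) q"
    using postcomp_rel_iff[OF comp_in_hom[OF f g]] by (cases x) fastforce
  have k: "k \<in> Hom (Dom E t) X" using x(2) unfolding roofs_iff by simp
  have m: "(t, f \<cdot> k) \<in> roofs Y X'" using roofs_postcomp[OF x(2) f] .
  then have "((t, k), (t, f \<cdot> k)) \<in> postcomp_rel Y f"
    using postcomp_rel_iff[OF f] x(2) roof_equiv_refl by blast
  moreover have "((t, f \<cdot> k), q) \<in> postcomp_rel Y g"
    using postcomp_rel_iff[OF g] m x(3,4) comp_assoc[OF k f g] by simp
  ultimately show "x \<in> postcomp_rel Y f O postcomp_rel Y g" using x(1) by blast
next
  fix x assume "x \<in> postcomp_rel Y f O postcomp_rel Y g"
  then obtain t k m1 m2 q1 q2 where x: "x = ((t, k), (q1, q2))" "((t, k), (m1, m2)) \<in> postcomp_rel Y f"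
    "((m1, m2), (q1, q2)) \<in> postcomp_rel Y g"
    by (cases x) fastforce
  have A: "(t, k) \<in> roofs Y X" "roof_equiv Y (t, f \<cdot> k) (m1, m2)"
    using x(2) postcomp_rel_iff[OF f] by auto
  have B: "(q1, q2) \<in> roofs Y X''" "roof_equiv Y (m1, g \<cdot> m2) (q1, q2)"
    using x(3) postcomp_rel_iff[OF g] by auto
  have k: "k \<in> Hom (Dom E t) X" using A(1) unfolding roofs_iff by simp
  have "roof_equiv Y (t, (g \<cdot> f) \<cdot> k) (q1, q2)"
    using roof_equiv_trans[OF roof_equiv_postcomp[OF A(2) roofs_postcomp[OF A(1) f] g] B(2)]
      comp_assoc[OF k f g] by simp
  then show "x \<in> postcomp_rel Y (g \<cdot> f)" using postcomp_rel_iff[OF comp_in_hom[OF f g]] x(1) A(1) B(1) by simp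
qed

lemma is_functor_roof_functor: "is_functor E (roof_cat Y) (\<lambda>X. X) (roof_functor Y)"
  unfolding is_functor_def
proof (intro conjI ballI impI)
  fix f assume "f \<in> Arr E"
  then have "roof_functor Y f \<in> hom (roof_cat Y) (Dom E f) (Cod E f)" using roof_functor_in_hom arr_in_hom by blast
  then show "roof_functor Y f \<in> Arr (roof_cat Y)" "Dom (roof_cat Y) (roof_functor Y f) = Dom E f"
    "Cod (roof_cat Y) (roof_functor Y f) = Cod E f" unfolding hom_def by auto
next
  fix X assume X: "X \<in> Obj E"
  show "X \<in> Obj (roof_cat Y)" using X roof_cat_simps by simp
  show "roof_functor Y (Id E X) = Id (roof_cat Y) X"
    using id_in_hom[OF X] postcomp_rel_Id[OF X] roof_cat_simps unfolding roof_functor_def hom_def by simp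
next
  fix f g assume "f \<in> Arr E" "g \<in> Arr E" "Cod E f = Dom E g"
  then have f: "f \<in> Hom (Dom E f) (Dom E g)" and g: "g \<in> Hom (Dom E g) (Cod E g)"
    using arr_in_hom[of f] arr_in_hom[of g] by simp_all
  then show "roof_functor Y (g \<cdot> f) = Comp (roof_cat Y) (roof_functor Y g) (roof_functor Y f)"
    using comp_in_hom[OF f g] postcomp_rel_comp[OF f g] roof_cat_simps unfolding roof_functor_def hom_def
    by simp
qed

lemma postcomp_rel_surj:
  assumes s: "s \<in> S" "s \<in> Hom X X'" and q: "(t, g') \<in> roofs Y X'"
  shows "\<exists>p. (p, (t, g')) \<in> postcomp_rel Y s"
proof -
  have t: "t \<in> S" "t \<in> Hom (Dom E t) Y" and g': "g' \<in> Hom (Dom E t) (Cod E s)"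
    using q roofs_S_hom s(2) unfolding roofs_iff hom_def by auto
  obtain W v h where o: "v \<in> S" "v \<in> Hom W (Dom E t)" "h \<in> Hom W (Dom E s)" "s \<cdot> h = g' \<cdot> v"
    using S_right_ore[OF s(1) g'] by blast
  have h: "h \<in> Hom W X" using o(3) s(2) unfolding hom_def by simp
  have tv: "t \<cdot> v \<in> Hom W Y" "t \<cdot> v \<in> S" using comp_in_hom[OF o(2) t(2)] S_comp[OF o(1) t(1) o(2) t(2)] .
  then have p: "(t \<cdot> v, h) \<in> roofs Y X" using h unfolding roofs_iff hom_def by auto
  have W: "W \<in> Obj E" using hom_objs[OF h] by blast
  have dW: "Dom E (t \<cdot> v) = W" using tv(1) unfolding hom_def by simp
  have "(t \<cdot> v) \<cdot> Id E W = t \<cdot> v" "(s \<cdot> h) \<cdot> Id E W = g' \<cdot> v"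
    using tv(1) comp_in_hom[OF h s(2)] o(4) by simp_all
  then have "roof_equiv Y (t \<cdot> v, s \<cdot> h) (t, g')"
    using roof_equivI[OF roofs_postcomp[OF p s(2)] q _ o(2)] id_in_hom[OF W] tv(2) dW by simp
  then show ?thesis using postcomp_rel_iff[OF s(2)] p q by auto
qed

lemma postcomp_rel_inj:
  assumes s: "s \<in> S" "s \<in> Hom X X'" and p: "(t1, g1) \<in> roofs Y X" "(t2, g2) \<in> roofs Y X"
    and e: "roof_equiv Y (t1, s \<cdot> g1) (t2, s \<cdot> g2)"
  shows "roof_equiv Y (t1, g1) (t2, g2)"
proof -
  have g: "g1 \<in> Hom (Dom E t1) X" "g2 \<in> Hom (Dom E t2) X" using p unfolding roofs_iff by auto
  have t: "t1 \<in> Hom (Dom E t1) Y" "t2 \<in> Hom (Dom E t2) Y" using roofs_S_hom p by auto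
  obtain X0 W u1 u2 where A: "u1 \<in> Hom W (Dom E t1)" "u2 \<in> Hom W (Dom E t2)"
    "t1 \<cdot> u1 = t2 \<cdot> u2" "t1 \<cdot> u1 \<in> S" "(s \<cdot> g1) \<cdot> u1 = (s \<cdot> g2) \<cdot> u2"
    using roof_equivE[OF e] by metis
  have "s \<cdot> (g1 \<cdot> u1) = s \<cdot> (g2 \<cdot> u2)" using A(5) comp_assoc[OF A(1) g(1) s(2)] comp_assoc[OF A(2) g(2) s(2)] by simp
  moreover have "Dom E s = X" using s(2) unfolding hom_def by simp
  ultimately obtain W' r where R: "r \<in> S" "r \<in> Hom W' W" "(g1 \<cdot> u1) \<cdot> r = (g2 \<cdot> u2) \<cdot> r"
    using S_right_cancel[OF s(1), of "g1 \<cdot> u1" W "g2 \<cdot> u2"] comp_in_hom[OF A(1) g(1)] comp_in_hom[OF A(2) g(2)]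
    by auto
  have "t1 \<cdot> (u1 \<cdot> r) = t2 \<cdot> (u2 \<cdot> r)" using comp_eq_precomp[OF A(1) t(1) A(2) t(2) A(3) R(2)] .
  moreover have "g1 \<cdot> (u1 \<cdot> r) = g2 \<cdot> (u2 \<cdot> r)" using R(3) comp_assoc[OF R(2) A(1) g(1)] comp_assoc[OF R(2) A(2) g(2)] by simp
  moreover have "t1 \<cdot> (u1 \<cdot> r) \<in> S"
    using S_comp[OF R(1) A(4) R(2) comp_in_hom[OF A(1) t(1)]] comp_assoc[OF R(2) A(1) t(1)] by simp
  ultimately show ?thesis using roof_equivI[OF p comp_in_hom[OF R(2) A(1)] comp_in_hom[OF R(2) A(2)]] by blast
qed

lemma postcomp_rel_relcomp_converse:
  assumes "s \<in> S" and s: "s \<in> Hom X X'"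
  shows "postcomp_rel Y s O (postcomp_rel Y s)\<inverse> = equiv_on_carrier (roofs Y) (roof_equiv Y) X"
proof (intro set_eqI iffI)
  fix x assume "x \<in> postcomp_rel Y s O (postcomp_rel Y s)\<inverse>"
  then obtain t g q1 q2 t' g' where x: "x = ((t, g), (t', g'))" "((t, g), (q1, q2)) \<in> postcomp_rel Y s"
    "((t', g'), (q1, q2)) \<in> postcomp_rel Y s" by auto
  have p: "(t, g) \<in> roofs Y X" "(t', g') \<in> roofs Y X" and "roof_equiv Y (t, s \<cdot> g) (q1, q2)"
    "roof_equiv Y (t', s \<cdot> g') (q1, q2)" using x(2,3) postcomp_rel_iff[OF s] by auto
  then have "roof_equiv Y (t, g) (t', g')"
    using postcomp_rel_inj[OF assms(1) s p] roof_equiv_trans roof_equiv_sym by blast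
  then show "x \<in> equiv_on_carrier (roofs Y) (roof_equiv Y) X"
    using p x(1) unfolding equiv_on_carrier_def by simp
next
  fix x assume "x \<in> equiv_on_carrier (roofs Y) (roof_equiv Y) X"
  then obtain t g t' g' where x: "x = ((t, g), (t', g'))" "(t, g) \<in> roofs Y X" "(t', g') \<in> roofs Y X"
    "roof_equiv Y (t, g) (t', g')" unfolding equiv_on_carrier_def by auto
  have "(t, s \<cdot> g) \<in> roofs Y X'" using roofs_postcomp[OF x(2) s] .
  then have "((t, g), (t, s \<cdot> g)) \<in> postcomp_rel Y s" "((t', g'), (t, s \<cdot> g)) \<in> postcomp_rel Y s"
    using postcomp_rel_iff[OF s] x(2,3) roof_equiv_refl roof_equiv_sym[OF roof_equiv_postcomp[OF x(4) x(2) s]] by auto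
  then show "x \<in> postcomp_rel Y s O (postcomp_rel Y s)\<inverse>" using x(1) by blast
qed

lemma converse_relcomp_postcomp_rel:
  assumes "s \<in> S" and s: "s \<in> Hom X X'"
  shows "(postcomp_rel Y s)\<inverse> O postcomp_rel Y s = equiv_on_carrier (roofs Y) (roof_equiv Y) X'"
proof (intro set_eqI iffI)
  fix x assume "x \<in> (postcomp_rel Y s)\<inverse> O postcomp_rel Y s"
  then obtain t g q1 q2 q1' q2' where x: "x = ((q1, q2), (q1', q2'))" "((t, g), (q1, q2)) \<in> postcomp_rel Y s"
    "((t, g), (q1', q2')) \<in> postcomp_rel Y s" by auto
  have q: "(q1, q2) \<in> roofs Y X'" "(q1', q2') \<in> roofs Y X'" and "roof_equiv Y (t, s \<cdot> g) (q1, q2)"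
    "roof_equiv Y (t, s \<cdot> g) (q1', q2')" using x(2,3) postcomp_rel_iff[OF s] by auto
  then have "roof_equiv Y (q1, q2) (q1', q2')" using roof_equiv_trans roof_equiv_sym by blast
  then show "x \<in> equiv_on_carrier (roofs Y) (roof_equiv Y) X'"
    using q x(1) unfolding equiv_on_carrier_def by simp
next
  fix x assume "x \<in> equiv_on_carrier (roofs Y) (roof_equiv Y) X'"
  then obtain t g t' g' where x: "x = ((t, g), (t', g'))" "(t, g) \<in> roofs Y X'" "(t', g') \<in> roofs Y X'"
    "roof_equiv Y (t, g) (t', g')" unfolding equiv_on_carrier_def by auto
  obtain p1 p2 where p: "((p1, p2), (t, g)) \<in> postcomp_rel Y s"
    using postcomp_rel_surj[OF assms(1) s x(2)] by auto
  then have "((p1, p2), (t', g')) \<in> postcomp_rel Y s"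
    using postcomp_rel_iff[OF s] x(3,4) roof_equiv_trans by auto
  then show "x \<in> (postcomp_rel Y s)\<inverse> O postcomp_rel Y s" using p x(1) by blast
qed

lemma roof_functor_iso:
  assumes "s \<in> S"
  shows "is_iso (roof_cat Y) (roof_functor Y s)"
proof -
  have s: "s \<in> Hom (Dom E s) (Cod E s)" using S_in_hom[OF assms] .
  show ?thesis
    using carrier_equiv.iso_rel_arrow[OF carrier_equiv_roofs hom_objs[OF s, THEN conjunct1]
        hom_objs[OF s, THEN conjunct2] saturated_postcomp_rel[OF s]]
      postcomp_rel_relcomp_converse[OF assms s] converse_relcomp_postcomp_rel[OF assms s]
    unfolding roof_functor_def by simp
qed

lemma localization_iso_roof_functor_iso:
  "localization_iso E S f \<Longrightarrow> is_iso (roof_cat Y) (roof_functor Y f)"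
  using carrier_equiv.rel_category_is_category[OF carrier_equiv_roofs] is_functor_roof_functor roof_functor_iso
  unfolding localization_iso_def by blast

lemma Id_roof: "Y \<in> Obj E \<Longrightarrow> (Id E Y, Id E Y) \<in> roofs Y Y"
  using Id_in_S id_in_hom unfolding roofs_iff hom_def by auto

lemma localization_iso_precomp_in_S:
  assumes "localization_iso E S f" "f \<in> Hom X Y"
  shows "\<exists>W h. h \<in> Hom W X \<and> f \<cdot> h \<in> S"
proof -
  have Y: "Y \<in> Obj E" using hom_objs[OF assms(2)] by blast
  obtain G where G: "G \<in> hom (roof_cat Y) Y X" "Comp (roof_cat Y) (roof_functor Y f) G = Id (roof_cat Y) Y"
    using is_isoE[OF localization_iso_roof_functor_iso[OF assms(1)] roof_functor_in_hom[OF assms(2)]] by metis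
  obtain R where "G = rel_arrow Y X R" using carrier_equiv.homE[OF carrier_equiv_roofs G(1)] by metis
  then have "R O postcomp_rel Y f = equiv_on_carrier (roofs Y) (roof_equiv Y) Y"
    using G(2) assms(2) roof_cat_simps unfolding roof_functor_def hom_def by (simp add: rel_arrow_eq_iff)
  moreover have "((Id E Y, Id E Y), (Id E Y, Id E Y)) \<in> equiv_on_carrier (roofs Y) (roof_equiv Y) Y"
    using Id_roof[OF Y] roof_equiv_refl unfolding equiv_on_carrier_def by blast
  ultimately have "((Id E Y, Id E Y), (Id E Y, Id E Y)) \<in> R O postcomp_rel Y f" by simp
  then obtain m where "(m, (Id E Y, Id E Y)) \<in> postcomp_rel Y f" by blast
  then obtain t g where "((t, g), (Id E Y, Id E Y)) \<in> postcomp_rel Y f" by (cases m) blast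
  then have tg: "(t, g) \<in> roofs Y X" and "roof_equiv Y (t, f \<cdot> g) (Id E Y, Id E Y)"
    using postcomp_rel_iff[OF assms(2)] by auto
  then obtain X0 W u1 u2 where u: "u1 \<in> Hom W (Dom E t)" "u2 \<in> Hom W (Dom E (Id E Y))"
    "t \<cdot> u1 = Id E Y \<cdot> u2" "t \<cdot> u1 \<in> S" "(f \<cdot> g) \<cdot> u1 = Id E Y \<cdot> u2"
    by (auto elim: roof_equivE)
  have g: "g \<in> Hom (Dom E t) X" using tg unfolding roofs_iff by simp
  have "u2 \<in> Hom W Y" using u(2) id_in_hom[OF Y] unfolding hom_def by simp
  then have "f \<cdot> (g \<cdot> u1) \<in> S" using u(3-5) comp_assoc[OF u(1) g assms(2)] by simp
  then show ?thesis using comp_in_hom[OF u(1) g] by blast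
qed

lemma localization_iso_split_epi_fixes:
  assumes "localization_iso E S e" "e \<in> Hom K W" "c \<in> Hom W K" "e \<cdot> c = Id E W"
  shows "\<exists>V u. u \<in> S \<and> u \<in> Hom V K \<and> c \<cdot> (e \<cdot> u) = u"
proof -
  have O: "K \<in> Obj E" "W \<in> Obj E" using hom_objs[OF assms(2)] by auto
  note F = is_functor_roof_functor[of K]
  have C: "is_category (roof_cat K)" using carrier_equiv.rel_category_is_category[OF carrier_equiv_roofs] .
  have "Comp (roof_cat K) (roof_functor K e) (roof_functor K c) = Id (roof_cat K) W"
    using functor_comp[OF F assms(3,2)] assms(4) functor_id[OF F O(2)] by simp
  then have "Comp (roof_cat K) (roof_functor K c) (roof_functor K e) = Id (roof_cat K) K"
    using iso_right_inverse_is_inverse[OF C localization_iso_roof_functor_iso[OF assms(1)]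
        roof_functor_in_hom[OF assms(2)] roof_functor_in_hom[OF assms(3)]] by simp
  then have "roof_functor K (c \<cdot> e) = Id (roof_cat K) K" using functor_comp[OF F assms(2,3)] by simp
  then have "postcomp_rel K (c \<cdot> e) = equiv_on_carrier (roofs K) (roof_equiv K) K"
    using comp_in_hom[OF assms(2,3)] roof_cat_simps unfolding roof_functor_def hom_def
    by (simp add: rel_arrow_eq_iff)
  then have "((Id E K, Id E K), (Id E K, Id E K)) \<in> postcomp_rel K (c \<cdot> e)"
    using Id_roof[OF O(1)] roof_equiv_refl unfolding equiv_on_carrier_def by blast
  then have "roof_equiv K (Id E K, (c \<cdot> e) \<cdot> Id E K) (Id E K, Id E K)"
    using postcomp_rel_iff[OF comp_in_hom[OF assms(2,3)]] by blast
  then obtain X0 V u1 u2 where u: "u1 \<in> Hom V (Dom E (Id E K))" "u2 \<in> Hom V (Dom E (Id E K))"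
    "Id E K \<cdot> u1 = Id E K \<cdot> u2" "Id E K \<cdot> u1 \<in> S" "((c \<cdot> e) \<cdot> Id E K) \<cdot> u1 = Id E K \<cdot> u2"
    by (auto elim: roof_equivE)
  moreover have u12: "u1 \<in> Hom V K" "u2 \<in> Hom V K" using u(1,2) id_in_hom[OF O(1)] unfolding hom_def by auto
  ultimately have "u1 \<in> S" "c \<cdot> (e \<cdot> u1) = u1"
    using comp_in_hom[OF assms(2,3)] comp_assoc[OF u12(1) assms(2,3)] by simp_all
  then show ?thesis using u12(1) by blast
qed

lemma localization_iso_split_epi_in_S:
  assumes "localization_iso E S e" "e \<in> Hom K W" "c \<in> Hom W K" "e \<cdot> c = Id E W"
  shows "\<exists>V u. u \<in> S \<and> u \<in> Hom V K \<and> e \<cdot> u \<in> S"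
proof -
  obtain V u where u: "u \<in> S" "u \<in> Hom V K" "c \<cdot> (e \<cdot> u) = u"
    using localization_iso_split_epi_fixes[OF assms] by blast
  have K: "K \<in> Obj E" and ce: "c \<cdot> e \<in> Hom K K" using hom_objs[OF u(2)] comp_in_hom[OF assms(2,3)] by auto
  have "(Id E K \<ominus> c \<cdot> e) \<cdot> u = u \<ominus> u"
    using diff_comp[OF u(2) id_in_hom[OF K] ce] comp_assoc[OF u(2) assms(2,3)] u(2,3) by simp
  also have "\<dots> = Z V K" using diff_eq_zero_iff[OF u(2) u(2)] by simp
  finally have "(Id E K \<ominus> c \<cdot> e) \<cdot> u = Z V K" .
  moreover have "Dom E u = V" "Cod E u = K" using u(2) unfolding hom_def by auto
  ultimately have "factors_through_A (Id E K \<ominus> c \<cdot> e) K K"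
    using factors_through_A_if_vanishes_on_S[OF u(1), of "Id E K \<ominus> c \<cdot> e" K]
      diff_in_hom[OF id_in_hom[OF K] ce] by simp
  then show ?thesis using split_epi_in_S_if_complement_factors_through_A[OF assms(2-4)] by blast
qed

end

theorem proposition5p6:
  fixes E :: "('o, 'm) addcat" and Conf :: "('m \<times> 'm) set" and A :: "'o set"
  assumes "right_exact E Conf"
    and "strongly_right_percolating E Conf A"
  shows "right_weakly_saturated E (S_A E Conf A)"
proof -
  interpret percolating_cat E Conf A using assms by unfold_locales
  show ?thesis unfolding right_weakly_saturated_def
  proof (intro ballI impI)
    fix f assume "f \<in> Arr E" and Qf: "localization_iso E S f"
    define X Y where "X = Dom E f" and "Y = Cod E f"
    have f: "f \<in> Hom X Y" using arr_in_hom[OF \<open>f \<in> Arr E\<close>] unfolding X_def Y_def .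
    obtain W h where h: "h \<in> Hom W X" and t: "f \<cdot> h \<in> S" "f \<cdot> h \<in> Hom W Y"
      using localization_iso_precomp_in_S[OF Qf f] comp_in_hom f by blast
    have d: "Cod E (f \<cdot> h) = Y" "Dom E (f \<cdot> h) = W" using t(2) unfolding hom_def by auto
    have "f \<cdot> h = (f \<cdot> h) \<cdot> Id E W" using t(2) by simp
    then obtain K s e c where s: "s \<in> S" "s \<in> Hom K X" and e: "e \<in> Hom K W" and c: "c \<in> Hom W K"
      and fs: "f \<cdot> s = (f \<cdot> h) \<cdot> e" and ec: "e \<cdot> c = Id E W"
      using S_refine_square[OF t(1), of f X h W "Id E W"] f h id_in_hom hom_objs[OF h] unfolding d by blast
    have "localization_iso E S e" using localization_iso_cancel[OF Qf f s t(1,2) e fs] .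
    then obtain V u where u: "u \<in> S" "u \<in> Hom V K" "e \<cdot> u \<in> S"
      using localization_iso_split_epi_in_S[OF _ e c ec] by blast
    have "f \<cdot> (s \<cdot> u) = (f \<cdot> h) \<cdot> (e \<cdot> u)" using comp_eq_precomp[OF s(2) f e t(2) fs u(2)] .
    then have "f \<cdot> (s \<cdot> u) \<in> S" using S_comp[OF u(3) t(1) comp_in_hom[OF u(2) e] t(2)] by simp
    moreover have "s \<cdot> u \<in> S" "Cod E (s \<cdot> u) = Dom E f"
      using S_comp[OF u(1) s(1) u(2) s(2)] comp_in_hom[OF u(2) s(2)] unfolding X_def hom_def by auto
    ultimately show "\<exists>s\<in>S. Cod E s = Dom E f \<and> f \<cdot> s \<in> S" by blast
  qed
qed

end
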